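(* Let $f:\mathbb{R}^{d_1}\times\mathbb{R}^{d_2}\to\mathbb{R}$ satisfy: (i) for every fixed $x$, $\max_y f(x,y)$ has a nonempty solution set and a finite optimal value, and there is $\mu>0$ with $\|\nabla_y f(x,y)\|^2\geq 2\mu[\max_{y'}f(x,y')-f(x,y)]$ for all $x,y$; (ii) there is $l>0$ with $\|\nabla_x f(x_1,y_1)-\nabla_x f(x_2,y_2)\|\leq l[\|x_1-x_2\|+\|y_1-y_2\|]$ and $\|\nabla_y f(x_1,y_1)-\nabla_y f(x_2,y_2)\|\leq l[\|x_1-x_2\|+\|y_1-y_2\|]$ for all $x_1,x_2,y_1,y_2$. Let $\Phi(x)=\max_y f(x,y)$, $\kappa=l/\mu$, $L=l+\frac{l^2}{2\mu}$. Let $(x_t,y_t)$ be generated by the ZO-AGDA iteration described in the context with step sizes $\alpha,\beta>0$ and smoothing parameters $\mu_1,\mu_2>0$, and let $V_t=\frac32\Phi(x_t)-\frac12 f(x_t,y_t)$. If $\beta\leq\frac{1}{4d_2L}$ and $\alpha\leq\min\{\frac{\beta}{32\kappa^2},\frac{1}{10d_1L}\}$, then for every $t$, $$\mathbb{E}V_t-\mathbb{E}V_{t+1}\geq \frac{\alpha}{4}\mathbb{E}\|\nabla\Phi(x_t)\|^2-\frac{\theta_1}{4}\mu_1^2-\frac{3d_2^2L^2\beta}{16}\mu_2^2,$$ where $\theta_1=\left(5d_1L+\frac{3}{2\alpha}+\frac32 L+d_2L\right)d_1^2L^2\alpha^2$.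
   Context: ZO-AGDA iteration: given $(x_t,y_t)$, draw $u_t$ uniformly from the unit sphere in $\mathbb{R}^{d_1}$ and $v_t$ uniformly from the unit sphere in $\mathbb{R}^{d_2}$, independently of everything else, and set $x_{t+1}=x_t-\alpha\,\frac{f(x_t+\mu_1u_t,y_t)-f(x_t,y_t)}{\mu_1/d_1}u_t$, then $y_{t+1}=y_t+\beta\,\frac{f(x_{t+1},y_t+\mu_2v_t)-f(x_{t+1},y_t)}{\mu_2/d_2}v_t$. Expectations are over all random vectors drawn by the algorithm. $\|\cdot\|$ is the Euclidean norm. *)

theory Defs
  imports "HOL-Probability.Probability"
begin

definition grad :: "('a::euclidean_space \<Rightarrow> real) \<Rightarrow> 'a \<Rightarrow> 'a" where
  "grad g x = (THE v. (g has_derivative (\<lambda>h. v \<bullet> h)) (at x))"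

definition Phi :: "('a \<Rightarrow> 'b \<Rightarrow> real) \<Rightarrow> 'a \<Rightarrow> real" where
  "Phi f x = (SUP y. f x y)"

definition unif_sphere :: "'a::euclidean_space measure" where
  "unif_sphere = distr (uniform_measure lborel (ball 0 1)) borel (\<lambda>x. x /\<^sub>R norm x)"

definition dir_space :: "(nat \<Rightarrow> 'a::euclidean_space \<times> 'b::euclidean_space) measure" where
  "dir_space = PiM UNIV (\<lambda>_. unif_sphere \<Otimes>\<^sub>M unif_sphere)"

primrec zo_agda ::
  "('a::euclidean_space \<Rightarrow> 'b::euclidean_space \<Rightarrow> real) \<Rightarrow> real \<Rightarrow> real \<Rightarrow> real \<Rightarrow> real
   \<Rightarrow> 'a \<Rightarrow> 'b \<Rightarrow> (nat \<Rightarrow> 'a \<times> 'b) \<Rightarrow> nat \<Rightarrow> 'a \<times> 'b" where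
  "zo_agda f \<alpha> \<beta> \<mu>1 \<mu>2 x0 y0 \<omega> 0 = (x0, y0)"
| "zo_agda f \<alpha> \<beta> \<mu>1 \<mu>2 x0 y0 \<omega> (Suc t) =
    (let x = fst (zo_agda f \<alpha> \<beta> \<mu>1 \<mu>2 x0 y0 \<omega> t);
         y = snd (zo_agda f \<alpha> \<beta> \<mu>1 \<mu>2 x0 y0 \<omega> t);
         u = fst (\<omega> t); v = snd (\<omega> t);
         x' = x - (\<alpha> * ((f (x + \<mu>1 *\<^sub>R u) y - f x y) / (\<mu>1 / real DIM('a)))) *\<^sub>R u;
         y' = y + (\<beta> * ((f x' (y + \<mu>2 *\<^sub>R v) - f x' y) / (\<mu>2 / real DIM('b)))) *\<^sub>R v
     in (x', y'))"

end

theory Submission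
  imports Defs
begin

text \<open>The PL inequality gives an error bound: some maximiser of \<open>f(x, \<cdot>)\<close> lies within
  \<open>(12/11) \<parallel>\<nabla>\<^sub>y f(x, y)\<parallel> / \<mu>\<close> of \<open>y\<close>. Hence (Danskin) \<open>\<Phi>\<close> is differentiable with a
  Lipschitz gradient \<open>\<nabla>\<Phi>(x) = \<nabla>\<^sub>x f(x, y\<^sup>*)\<close>, and \<open>\<nabla>\<Phi>(x)\<close> is close to \<open>\<nabla>\<^sub>x f(x, y)\<close> when
  \<open>\<nabla>\<^sub>y f(x, y)\<close> is small. As \<open>E[u u\<^sup>T] = I/d\<close> for a uniform direction \<open>u\<close>, the zeroth-order
  estimator has mean \<open>\<nabla>f\<close> up to \<open>O(d l \<mu>)\<close> and second moment at most
  \<open>(3/2) d \<parallel>\<nabla>f\<parallel>\<^sup>2 + O(d\<^sup>2 l\<^sup>2 \<mu>\<^sup>2)\<close>. The descent lemma for \<open>\<Phi>\<close> in the \<open>x\<close>-step and the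
  ascent of \<open>f\<close> in the \<open>y\<close>-step then give the inequality conditionally on \<open>(x\<^sub>t, y\<^sub>t)\<close>, and
  Fubini on the product of the direction measures removes the conditioning.\<close>

section \<open>Gradients and the descent lemma\<close>

lemma grad_eqI:
  fixes g :: "'a::euclidean_space \<Rightarrow> real"
  assumes "(g has_derivative (\<lambda>h. v \<bullet> h)) (at x)"
  shows "grad g x = v"
  unfolding grad_def
proof (rule the_equality[where P="\<lambda>w. (g has_derivative (\<lambda>h. w \<bullet> h)) (at x)", OF assms])
  fix w assume "(g has_derivative (\<lambda>h. w \<bullet> h)) (at x)"
  from has_derivative_unique[OF this assms] have "\<And>h. w \<bullet> h = v \<bullet> h" by metis
  from this[of "w - v"] have "(w - v) \<bullet> (w - v) = 0" by (simp add: inner_diff_left)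
  then show "w = v" by simp
qed

lemma has_derivative_grad:
  fixes g :: "'a::euclidean_space \<Rightarrow> real"
  assumes "g differentiable (at x)"
  shows "(g has_derivative (\<lambda>h. grad g x \<bullet> h)) (at x)"
proof -
  obtain D where D: "(g has_derivative D) (at x)"
    using assms by (auto simp: differentiable_def)
  have "D = (\<lambda>h. adjoint D 1 \<bullet> h)"
    using adjoint_works[OF has_derivative_linear[OF D], of _ 1] by (auto simp: inner_commute)
  with D show ?thesis
    using grad_eqI by metis
qed

lemma has_real_derivative_grad_along_line:
  fixes g :: "'a::euclidean_space \<Rightarrow> real"
  assumes "\<And>z. g differentiable (at z)"
  shows "((\<lambda>t. g (x + t *\<^sub>R h)) has_real_derivative (grad g (x + t *\<^sub>R h) \<bullet> h)) (at t)"
proof -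
  have "((\<lambda>t. x + t *\<^sub>R h) has_derivative (\<lambda>s. s *\<^sub>R h)) (at t)"
    by (auto intro!: derivative_eq_intros)
  from has_derivative_compose[OF this has_derivative_grad[OF assms]]
  have "((\<lambda>t. g (x + t *\<^sub>R h)) has_derivative (\<lambda>s. grad g (x + t *\<^sub>R h) \<bullet> (s *\<^sub>R h))) (at t)"
    by (simp add: o_def)
  moreover have "(\<lambda>s. grad g (x + t *\<^sub>R h) \<bullet> (s *\<^sub>R h)) = (*) (grad g (x + t *\<^sub>R h) \<bullet> h)"
    by (auto simp: fun_eq_iff)
  ultimately show ?thesis
    unfolding has_field_derivative_def by simp
qed

lemma increment_le_of_derivative_le_linear:
  fixes \<psi> \<psi>' :: "real \<Rightarrow> real"
  assumes "continuous_on {0..1} \<psi>"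
    and "\<And>t. 0 < t \<Longrightarrow> t < 1 \<Longrightarrow> (\<psi> has_real_derivative \<psi>' t) (at t)"
    and "\<And>t. 0 < t \<Longrightarrow> t < 1 \<Longrightarrow> \<psi>' t \<le> K * t"
  shows "\<psi> 1 - \<psi> 0 \<le> K / 2"
proof -
  have "\<psi> 1 - K * 1\<^sup>2 / 2 \<le> \<psi> 0 - K * 0\<^sup>2 / 2"
  proof (rule DERIV_nonpos_imp_decreasing_open[of 0 1 "\<lambda>t. \<psi> t - K * t\<^sup>2 / 2"])
    fix t :: real assume t: "0 < t" "t < 1"
    have "((\<lambda>t. \<psi> t - K * t\<^sup>2 / 2) has_real_derivative \<psi>' t - K * t) (at t)"
      by (auto intro!: derivative_eq_intros assms(2) t)
    then show "\<exists>y. ((\<lambda>t. \<psi> t - K * t\<^sup>2 / 2) has_real_derivative y) (at t) \<and> y \<le> 0"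
      using assms(3)[OF t] by auto
  qed (intro continuous_intros assms(1) | simp)+
  then show ?thesis by simp
qed

lemma lipschitz_grad_taylor_bound:
  fixes g :: "'a::euclidean_space \<Rightarrow> real"
  assumes dif: "\<And>z. g differentiable (at z)"
    and lip: "\<And>z w. norm (grad g z - grad g w) \<le> l * norm (z - w)"
  shows "\<bar>g y - g x - grad g x \<bullet> (y - x)\<bar> \<le> l / 2 * (norm (y - x))\<^sup>2"
proof -
  define h where "h = y - x"
  define \<psi> where "\<psi> t = g (x + t *\<^sub>R h) - t * (grad g x \<bullet> h)" for t
  define \<psi>' where "\<psi>' t = (grad g (x + t *\<^sub>R h) - grad g x) \<bullet> h" for t
  have der: "(\<psi> has_real_derivative \<psi>' t) (at t)" for t
    unfolding \<psi>_def \<psi>'_def inner_diff_left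
    by (auto intro!: derivative_eq_intros has_real_derivative_grad_along_line[OF dif])
  have cont: "continuous_on {0..1} \<psi>"
    using der by (meson DERIV_continuous continuous_at_imp_continuous_on)
  have bound: "\<bar>\<psi>' t\<bar> \<le> l * (norm h)\<^sup>2 * t" if "0 < t" for t
  proof -
    have "\<bar>\<psi>' t\<bar> \<le> norm (grad g (x + t *\<^sub>R h) - grad g x) * norm h"
      unfolding \<psi>'_def by (rule Cauchy_Schwarz_ineq2)
    also have "\<dots> \<le> l * norm (t *\<^sub>R h) * norm h"
      using lip[of "x + t *\<^sub>R h" x] by (simp add: mult_right_mono)
    finally show ?thesis
      using that by (simp add: power2_eq_square mult_ac)
  qed
  have "\<psi> 1 - \<psi> 0 \<le> l * (norm h)\<^sup>2 / 2"
    by (rule increment_le_of_derivative_le_linear[OF cont der]) (use bound abs_le_iff in fastforce)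
  moreover have "(- \<psi> 1) - (- \<psi> 0) \<le> l * (norm h)\<^sup>2 / 2"
    by (rule increment_le_of_derivative_le_linear[OF continuous_on_minus[OF cont] DERIV_minus[OF der]])
       (use bound abs_le_iff in fastforce)
  ultimately show ?thesis
    unfolding \<psi>_def h_def abs_le_iff by simp
qed

section \<open>The uniform distribution on the unit sphere\<close>

abbreviation unif_ball :: "'a::euclidean_space measure" where
  "unif_ball \<equiv> uniform_measure lborel (ball 0 1)"

lemma sets_unif_sphere [measurable_cong, simp]:
  "sets (unif_sphere :: 'a::euclidean_space measure) = sets borel"
  by (simp add: unif_sphere_def)

lemma space_unif_sphere [simp]: "space (unif_sphere :: 'a::euclidean_space measure) = UNIV"
  by (simp add: unif_sphere_def)

lemma prob_space_unif_ball: "prob_space (unif_ball :: 'a::euclidean_space measure)"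
proof (rule prob_space_uniform_measure)
  show "emeasure lborel (ball (0::'a) 1) \<noteq> 0"
    by (simp add: emeasure_ball ennreal_eq_0_iff not_le)
qed (use emeasure_lborel_ball_finite[of "0::'a" 1] in auto)

lemma prob_space_unif_sphere: "prob_space (unif_sphere :: 'a::euclidean_space measure)"
  unfolding unif_sphere_def by (rule prob_space.prob_space_distr[OF prob_space_unif_ball]) simp

lemma AE_unif_sphere_norm: "AE u in (unif_sphere :: 'a::euclidean_space measure). norm u = 1"
proof -
  have "AE x in (unif_ball :: 'a measure). x \<noteq> 0"
    by (rule AE_uniform_measureI) (auto intro: AE_mp[OF AE_lborel_singleton[of 0]])
  then show ?thesis
    unfolding unif_sphere_def by (subst AE_distr_iff) (auto elim: AE_mp)
qed

lemma integrable_unif_sphere_continuous: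
  fixes F :: "'a::euclidean_space \<Rightarrow> real"
  assumes "continuous_on UNIV F"
  shows "integrable unif_sphere F"
proof -
  interpret prob_space "unif_sphere :: 'a measure" by (rule prob_space_unif_sphere)
  have "compact (F ` cball 0 1)"
    by (rule compact_continuous_image) (use assms continuous_on_subset in auto)
  then obtain B where B: "\<And>u. u \<in> cball 0 1 \<Longrightarrow> norm (F u) \<le> B"
    by (meson bounded_iff compact_imp_bounded imageI)
  show ?thesis
  proof (rule integrable_const_bound)
    show "AE u in unif_sphere. norm (F u) \<le> B"
      using AE_unif_sphere_norm by eventually_elim (use B in auto)
    show "F \<in> borel_measurable unif_sphere"
      using borel_measurable_continuous_onI[OF assms] by simp
  qed
qed

lemma distr_unif_ball_invariant:
  fixes T :: "'a::euclidean_space \<Rightarrow> 'a"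
  assumes "\<And>x. norm (T x) = norm x" and "distr lborel borel T = lborel"
    and [measurable]: "T \<in> borel_measurable borel"
  shows "distr unif_ball borel T = unif_ball"
proof -
  define g where "g = (\<lambda>x::'a. indicator (ball 0 1) x / emeasure lborel (ball (0::'a) 1))"
  have [measurable]: "g \<in> borel_measurable borel"
    unfolding g_def by (intro borel_measurable_divide_ennreal borel_measurable_indicator) auto
  have "(\<lambda>x. g (T x)) = g"
    using assms(1) by (simp add: g_def indicator_def fun_eq_iff)
  moreover have "density (distr lborel borel T) g = distr (density lborel (\<lambda>x. g (T x))) borel T"
    by (rule density_distr) simp_all
  ultimately have "distr (density lborel g) borel T = density lborel g"
    using assms(2) by simp
  moreover have "(unif_ball :: 'a measure) = density lborel g"
    unfolding uniform_measure_def g_def ..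
  ultimately show ?thesis by simp
qed

lemma integral_unif_sphere_invariant:
  fixes T :: "'a::euclidean_space \<Rightarrow> 'a" and F :: "'a \<Rightarrow> real"
  assumes "linear T" and "\<And>x. norm (T x) = norm x" and "distr lborel borel T = lborel"
    and [measurable]: "F \<in> borel_measurable borel"
  shows "(\<integral>u. F (T u) \<partial>unif_sphere) = (\<integral>u. F u \<partial>unif_sphere)"
proof -
  have T_meas [measurable]: "T \<in> borel_measurable borel"
    using assms(1) by (simp add: borel_measurable_continuous_onI linear_continuous_on linear_conv_bounded_linear)
  have normalize_comm: "T \<circ> (\<lambda>x. x /\<^sub>R norm x) = (\<lambda>x. x /\<^sub>R norm x) \<circ> T"
    by (auto simp: fun_eq_iff assms(2) linear_scale[OF assms(1)])
  have "distr unif_sphere borel T = distr (unif_ball :: 'a measure) borel (T \<circ> (\<lambda>x. x /\<^sub>R norm x))"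
    unfolding unif_sphere_def by (subst distr_distr) auto
  also have "\<dots> = distr (distr (unif_ball :: 'a measure) borel T) borel (\<lambda>x. x /\<^sub>R norm x)"
    unfolding normalize_comm by (subst distr_distr) auto
  also have "\<dots> = unif_sphere"
    unfolding distr_unif_ball_invariant[OF assms(2,3) T_meas] unif_sphere_def by simp
  finally have "(\<integral>u. F u \<partial>unif_sphere) = (\<integral>u. F u \<partial>distr unif_sphere borel T)"
    by simp
  also have "\<dots> = (\<integral>u. F (T u) \<partial>unif_sphere)"
    by (rule integral_distr) auto
  finally show ?thesis ..
qed

definition reflect_coord :: "'a::euclidean_space \<Rightarrow> 'a \<Rightarrow> 'a" where
  "reflect_coord i x = x - (2 * (x \<bullet> i)) *\<^sub>R i"

lemma linear_reflect_coord: "linear (reflect_coord i)"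
  unfolding reflect_coord_def by (rule linearI) (auto simp: algebra_simps inner_add_left)

lemma inner_reflect_coord:
  assumes "i \<in> Basis" "j \<in> Basis"
  shows "reflect_coord i x \<bullet> j = (if j = i then - (x \<bullet> i) else x \<bullet> j)"
  unfolding reflect_coord_def using assms by (auto simp: inner_diff_left inner_Basis)

lemma norm_reflect_coord:
  assumes "i \<in> Basis"
  shows "norm (reflect_coord i x) = norm x"
proof -
  have "reflect_coord i x \<bullet> reflect_coord i x = x \<bullet> x"
    unfolding reflect_coord_def using assms
    by (simp add: inner_diff_left inner_diff_right algebra_simps inner_commute)
  then show ?thesis by (simp add: norm_eq_sqrt_inner)
qed

lemma distr_lborel_reflect_coord:
  assumes i: "i \<in> Basis"
  shows "distr lborel borel (reflect_coord i) = lborel"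
proof -
  define c where "c = (\<lambda>j::'a. if j = i then -1 else (1::real))"
  have "(\<lambda>x. 0 + (\<Sum>j\<in>Basis. (c j * (x \<bullet> j)) *\<^sub>R j)) = reflect_coord i"
  proof
    fix x :: 'a
    show "0 + (\<Sum>j\<in>Basis. (c j * (x \<bullet> j)) *\<^sub>R j) = reflect_coord i x"
      by (rule euclidean_eqI) (use i in \<open>auto simp: c_def inner_sum_left inner_Basis
            inner_reflect_coord if_distrib[of "\<lambda>t. _ * t"] cong: if_cong\<close>)
  qed
  moreover have "(\<Prod>j\<in>Basis. \<bar>c j\<bar>) = 1"
    by (rule prod.neutral) (simp add: c_def)
  ultimately show ?thesis
    using lborel_affine_euclidean[of c 0] by (simp add: c_def density_1)
qed

definition swap_coords :: "'a::euclidean_space \<Rightarrow> 'a \<Rightarrow> 'a \<Rightarrow> 'a" where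
  "swap_coords i k x = (\<Sum>b\<in>Basis. (x \<bullet> Transposition.transpose i k b) *\<^sub>R b)"

lemma inner_swap_coords:
  assumes "b \<in> Basis"
  shows "swap_coords i k x \<bullet> b = x \<bullet> Transposition.transpose i k b"
  unfolding swap_coords_def inner_sum_left using assms
  by (simp add: inner_Basis if_distrib[of "\<lambda>t. _ * t"] cong: if_cong)

lemma linear_swap_coords: "linear (swap_coords i k)"
  unfolding swap_coords_def
  by (rule linearI) (auto simp: inner_add_left scaleR_add_left sum.distrib scaleR_sum_right)

lemma norm_swap_coords:
  assumes "i \<in> Basis" "k \<in> Basis"
  shows "norm (swap_coords i k x) = norm x"
proof -
  have "swap_coords i k x \<bullet> swap_coords i k x
      = (\<Sum>b\<in>Basis. (x \<bullet> Transposition.transpose i k b) * (x \<bullet> Transposition.transpose i k b))"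
    by (subst euclidean_inner) (simp add: inner_swap_coords)
  also have "\<dots> = x \<bullet> x"
    unfolding euclidean_inner[of x x] using assms
    by (intro sum.reindex_bij_betw[where g="\<lambda>b. (x \<bullet> b) * (x \<bullet> b)"]) simp
  finally show ?thesis by (simp add: norm_eq_sqrt_inner)
qed

lemma distr_lborel_swap_coords:
  assumes i: "i \<in> Basis" and k: "k \<in> Basis"
  shows "distr lborel borel (swap_coords i k) = lborel"
proof (rule lborel_eqI[symmetric])
  let ?\<tau> = "Transposition.transpose i k" and ?T = "swap_coords i k"
  have [measurable]: "?T \<in> borel_measurable borel"
    using linear_swap_coords[of i k]
    by (intro borel_measurable_continuous_onI linear_continuous_on) (simp add: linear_conv_bounded_linear)
  have \<tau>_Basis: "b \<in> Basis \<Longrightarrow> ?\<tau> b \<in> Basis" for b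
    using i k by (cases "b = i"; cases "b = k") simp_all
  show "sets (distr lborel borel ?T) = sets borel" by simp
  fix l u :: 'a assume lu: "\<And>b. b \<in> Basis \<Longrightarrow> l \<bullet> b \<le> u \<bullet> b"
  have "?T -` box l u = box (?T l) (?T u)"
    using \<tau>_Basis by (fastforce simp: mem_box inner_swap_coords)
  then have "emeasure (distr lborel borel ?T) (box l u) = emeasure lborel (box (?T l) (?T u))"
    by (subst emeasure_distr) auto
  also have "\<dots> = ennreal (\<Prod>b\<in>Basis. (u - l) \<bullet> ?\<tau> b)"
    using lu \<tau>_Basis by (simp add: emeasure_lborel_box_eq inner_swap_coords inner_diff_left)
  also have "(\<Prod>b\<in>Basis. (u - l) \<bullet> ?\<tau> b) = (\<Prod>b\<in>Basis. (u - l) \<bullet> b)"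
    using i k by (intro prod.reindex_bij_betw[where g="\<lambda>b. (u - l) \<bullet> b"]) simp
  finally show "emeasure (distr lborel borel ?T) (box l u) = ennreal (\<Prod>b\<in>Basis. (u - l) \<bullet> b)" .
qed

lemma integrable_unif_sphere_inner_mult_inner:
  "integrable unif_sphere (\<lambda>u::'a::euclidean_space. (p \<bullet> u) * (q \<bullet> u))"
  by (rule integrable_unif_sphere_continuous) (intro continuous_intros)

lemma integral_unif_sphere_coord_mult_coord:
  assumes "i \<in> Basis" "j \<in> Basis" "j \<noteq> i"
  shows "(\<integral>u. (u \<bullet> i) * (u \<bullet> j) \<partial>(unif_sphere :: 'a::euclidean_space measure)) = 0"
proof -
  have "(\<integral>u. (u \<bullet> i) * (u \<bullet> j) \<partial>(unif_sphere :: 'a measure))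
      = (\<integral>u. (reflect_coord i u \<bullet> i) * (reflect_coord i u \<bullet> j) \<partial>unif_sphere)"
    by (rule integral_unif_sphere_invariant[symmetric, OF linear_reflect_coord
          norm_reflect_coord distr_lborel_reflect_coord]) (use assms in simp_all)
  also have "\<dots> = - (\<integral>u. (u \<bullet> i) * (u \<bullet> j) \<partial>unif_sphere)"
    using assms by (simp add: inner_reflect_coord)
  finally show ?thesis by simp
qed

lemma integral_unif_sphere_coord_square:
  assumes "i \<in> Basis"
  shows "(\<integral>u. (u \<bullet> i)\<^sup>2 \<partial>(unif_sphere :: 'a::euclidean_space measure)) = 1 / real DIM('a)"
proof -
  interpret prob_space "unif_sphere :: 'a measure" by (rule prob_space_unif_sphere)
  have same: "(\<integral>u. (u \<bullet> k)\<^sup>2 \<partial>unif_sphere) = (\<integral>u. (u \<bullet> i)\<^sup>2 \<partial>unif_sphere)" if k: "k \<in> Basis" for k :: 'a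
    using integral_unif_sphere_invariant[OF linear_swap_coords norm_swap_coords[OF assms k]
        distr_lborel_swap_coords[OF assms k], of "\<lambda>u. (u \<bullet> i)\<^sup>2"] assms k
    by (simp add: inner_swap_coords)
  have "(\<Sum>k\<in>Basis. (\<integral>u. (u \<bullet> k)\<^sup>2 \<partial>(unif_sphere :: 'a measure)))
      = (\<integral>u. (\<Sum>k\<in>Basis. (u \<bullet> k)\<^sup>2) \<partial>(unif_sphere :: 'a measure))"
    by (subst Bochner_Integration.integral_sum) (auto intro!: integrable_unif_sphere_continuous continuous_intros)
  also have "\<dots> = (\<integral>u. 1 \<partial>(unif_sphere :: 'a measure))"
  proof (rule integral_cong_AE)
    have sum_sq: "(\<Sum>k\<in>Basis. (u \<bullet> k)\<^sup>2) = (norm u)\<^sup>2" for u :: 'a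
      unfolding power2_norm_eq_inner euclidean_inner[of u u] by (simp add: power2_eq_square)
    show "AE u in (unif_sphere :: 'a measure). (\<Sum>k\<in>Basis. (u \<bullet> k)\<^sup>2) = (1::real)"
      using AE_unif_sphere_norm by eventually_elim (simp add: sum_sq)
  qed simp_all
  finally have "real DIM('a) * (\<integral>u. (u \<bullet> i)\<^sup>2 \<partial>unif_sphere) = 1"
    using same prob_space by simp
  then show ?thesis by (simp add: field_simps)
qed

lemma integral_unif_sphere_inner_mult_inner:
  fixes p q :: "'a::euclidean_space"
  shows "(\<integral>u. (p \<bullet> u) * (q \<bullet> u) \<partial>unif_sphere) = (p \<bullet> q) / real DIM('a)"
proof -
  have expand: "(p \<bullet> u) * (q \<bullet> u) = (\<Sum>i\<in>Basis. \<Sum>j\<in>Basis. ((p \<bullet> i) * (q \<bullet> j)) * ((u \<bullet> i) * (u \<bullet> j)))" for u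
    by (simp add: euclidean_inner[of p u] euclidean_inner[of q u] sum_product algebra_simps)
  have "(\<integral>u. (p \<bullet> u) * (q \<bullet> u) \<partial>unif_sphere)
      = (\<Sum>i\<in>Basis. \<Sum>j\<in>Basis. ((p \<bullet> i) * (q \<bullet> j)) * (\<integral>u. (u \<bullet> i) * (u \<bullet> j) \<partial>unif_sphere))"
    unfolding expand
    by (simp add: integral_sum integrable_sum integrable_unif_sphere_continuous continuous_intros)
  also have "\<dots> = (\<Sum>i\<in>Basis. ((p \<bullet> i) * (q \<bullet> i)) / real DIM('a))"
  proof (rule sum.cong[OF refl])
    fix i :: 'a assume i: "i \<in> Basis"
    show "(\<Sum>j\<in>Basis. ((p \<bullet> i) * (q \<bullet> j)) * (\<integral>u. (u \<bullet> i) * (u \<bullet> j) \<partial>unif_sphere))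
        = ((p \<bullet> i) * (q \<bullet> i)) / real DIM('a)"
      using i integral_unif_sphere_coord_square[OF i]
      by (subst sum.remove[OF finite_Basis i])
         (auto intro!: sum.neutral simp: integral_unif_sphere_coord_mult_coord power2_eq_square)
  qed
  also have "\<dots> = (p \<bullet> q) / real DIM('a)"
    by (simp add: euclidean_inner[of p q] sum_divide_distrib)
  finally show ?thesis .
qed

lemma pair_sigma_finite_unif_sphere:
  "pair_sigma_finite (unif_sphere :: 'a::euclidean_space measure) (unif_sphere :: 'b::euclidean_space measure)"
proof -
  interpret A: prob_space "unif_sphere :: 'a measure" by (rule prob_space_unif_sphere)
  interpret B: prob_space "unif_sphere :: 'b measure" by (rule prob_space_unif_sphere)
  show ?thesis by unfold_locales
qed

lemma prob_space_unif_sphere_pair: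
  "prob_space ((unif_sphere :: 'a::euclidean_space measure) \<Otimes>\<^sub>M (unif_sphere :: 'b::euclidean_space measure))"
proof -
  interpret A: prob_space "unif_sphere :: 'a measure" by (rule prob_space_unif_sphere)
  interpret B: prob_space "unif_sphere :: 'b measure" by (rule prob_space_unif_sphere)
  interpret P: pair_prob_space "unif_sphere :: 'a measure" "unif_sphere :: 'b measure" by unfold_locales
  show ?thesis by (rule P.prob_space_axioms)
qed

lemma sets_unif_sphere_pair [measurable_cong, simp]:
  "sets ((unif_sphere :: 'a::euclidean_space measure) \<Otimes>\<^sub>M (unif_sphere :: 'b::euclidean_space measure)) = sets borel"
proof -
  have "sets ((unif_sphere :: 'a measure) \<Otimes>\<^sub>M (unif_sphere :: 'b measure)) = sets ((borel :: 'a measure) \<Otimes>\<^sub>M (borel :: 'b measure))"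
    by (rule sets_pair_measure_cong) simp_all
  then show ?thesis by (simp only: borel_prod)
qed

lemma AE_unif_sphere_pair:
  "AE p in (unif_sphere :: 'a::euclidean_space measure) \<Otimes>\<^sub>M (unif_sphere :: 'b::euclidean_space measure).
     p \<in> cball 0 1 \<times> cball 0 1"
proof (rule pair_sigma_finite.AE_pair_measure[OF pair_sigma_finite_unif_sphere])
  show "{p \<in> space ((unif_sphere :: 'a measure) \<Otimes>\<^sub>M (unif_sphere :: 'b measure)). p \<in> cball 0 1 \<times> cball 0 1}
      \<in> sets ((unif_sphere :: 'a measure) \<Otimes>\<^sub>M (unif_sphere :: 'b measure))"
    by (simp add: space_pair_measure borel_closed closed_Times)
  show "AE x in unif_sphere. AE y in unif_sphere. (x, y) \<in> cball (0::'a) 1 \<times> cball (0::'b) 1"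
    using AE_unif_sphere_norm[where 'a = 'a]
    by eventually_elim (use AE_unif_sphere_norm[where 'a = 'b] in \<open>auto elim: AE_mp\<close>)
qed

lemma integrable_unif_sphere_pair_continuous:
  fixes F :: "'a::euclidean_space \<times> 'b::euclidean_space \<Rightarrow> real"
  assumes "continuous_on UNIV F"
  shows "integrable ((unif_sphere :: 'a measure) \<Otimes>\<^sub>M (unif_sphere :: 'b measure)) F"
proof -
  interpret prob_space "(unif_sphere :: 'a measure) \<Otimes>\<^sub>M (unif_sphere :: 'b measure)"
    by (rule prob_space_unif_sphere_pair)
  have "compact (F ` (cball 0 1 \<times> cball 0 1))"
    by (intro compact_continuous_image compact_Times compact_cball continuous_on_subset[OF assms]) simp
  then obtain B where B: "\<And>p. p \<in> cball 0 1 \<times> cball 0 1 \<Longrightarrow> norm (F p) \<le> B"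
    by (meson bounded_iff compact_imp_bounded imageI)
  show ?thesis
  proof (rule integrable_const_bound)
    show "AE p in (unif_sphere :: 'a measure) \<Otimes>\<^sub>M (unif_sphere :: 'b measure). norm (F p) \<le> B"
      using AE_unif_sphere_pair by eventually_elim (rule B)
    show "F \<in> borel_measurable ((unif_sphere :: 'a measure) \<Otimes>\<^sub>M (unif_sphere :: 'b measure))"
      using borel_measurable_continuous_onI[OF assms] by simp
  qed
qed

section \<open>An error bound from the Polyak-Lojasiewicz inequality\<close>

lemma convergent_if_norm_step_le_decrease:
  fixes Y :: "nat \<Rightarrow> 'a::banach"
  assumes step: "\<And>k. norm (Y (Suc k) - Y k) \<le> b k - b (Suc k)"
    and nonneg: "\<And>k. 0 \<le> b k"
  shows "\<exists>z. Y \<longlonglongrightarrow> z \<and> norm (z - Y 0) \<le> b 0"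
proof -
  have telescope: "norm (Y k - Y n) \<le> b n - b k" if "n \<le> k" for n k
    using that
  proof (induction k rule: dec_induct)
    case (step k)
    have "norm (Y (Suc k) - Y n) \<le> norm (Y (Suc k) - Y k) + norm (Y k - Y n)"
      by (rule norm_diff_triangle_le[where y = "Y k"]) simp_all
    with step.IH assms(1)[of k] show ?case by simp
  qed simp
  have "antimono b"
  proof (rule decseq_SucI)
    show "b (Suc k) \<le> b k" for k
      using step[of k] norm_ge_zero[of "Y (Suc k) - Y k"] by linarith
  qed
  then obtain B where "b \<longlonglongrightarrow> B"
    using decseq_convergent[of b 0] nonneg by blast
  then have "Cauchy b" by (rule LIMSEQ_imp_Cauchy)
  have "Cauchy Y"
  proof (rule metric_CauchyI)
    fix e :: real assume "e > 0"
    with \<open>Cauchy b\<close> obtain M where M: "\<And>m n. m \<ge> M \<Longrightarrow> n \<ge> M \<Longrightarrow> dist (b m) (b n) < e"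
      by (meson metric_CauchyD)
    have "dist (Y m) (Y n) < e" if "m \<ge> M" "n \<ge> M" "n \<le> m" for m n
    proof -
      have "norm (Y m - Y n) \<le> b n - b m"
        by (rule telescope[OF \<open>n \<le> m\<close>])
      moreover have "b n - b m < e"
        using M[OF that(1,2)] by (simp add: dist_real_def abs_less_iff)
      ultimately show ?thesis
        by (simp add: dist_norm)
    qed
    then show "\<exists>M. \<forall>m\<ge>M. \<forall>n\<ge>M. dist (Y m) (Y n) < e"
      by (metis dist_commute nat_le_linear)
  qed
  then obtain z where z: "Y \<longlonglongrightarrow> z"
    using Cauchy_convergent_iff convergent_def by blast
  have "norm (Y k - Y 0) \<le> b 0" for k
    using telescope[of 0 k] nonneg[of k] by simp
  moreover have "(\<lambda>k. norm (Y k - Y 0)) \<longlonglongrightarrow> norm (z - Y 0)"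
    by (intro tendsto_intros z)
  ultimately have "norm (z - Y 0) \<le> b 0"
    using LIMSEQ_le_const2 by blast
  with z show ?thesis by blast
qed

lemma step_le_sqrt_decrease:
  fixes A B c n s :: real
  assumes "0 \<le> B" "B \<le> A - c * n\<^sup>2" "s\<^sup>2 * A \<le> n\<^sup>2" "s > 0" "c > 0" "n \<ge> 0"
  shows "c * n \<le> 2 / s * (sqrt A - sqrt B)"
proof -
  have "0 \<le> c * n\<^sup>2" using assms by simp
  then have "B \<le> A" and "0 \<le> A" using assms(1,2) by linarith+
  define p q where "p = sqrt A" and "q = sqrt B"
  have p: "p \<ge> 0" "p\<^sup>2 = A" and q: "q \<ge> 0" "q\<^sup>2 = B"
    using \<open>0 \<le> A\<close> assms(1) by (auto simp: p_def q_def)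
  have "q \<le> p"
    unfolding p_def q_def using \<open>B \<le> A\<close> by (rule real_sqrt_le_mono)
  have "(s * p)\<^sup>2 \<le> n\<^sup>2" using assms(3) p by (simp add: power_mult_distrib)
  then have "s * p \<le> n" using assms(4,6) p by (meson mult_nonneg_nonneg power2_le_imp_le less_imp_le)
  then have "2 * p \<le> 2 * n / s"
    using assms(4) by (simp add: field_simps)
  then have "p + q \<le> 2 * n / s"
    using \<open>q \<le> p\<close> by linarith
  have "c * n * n \<le> (p - q) * (p + q)"
    using assms(2) p q by (simp add: algebra_simps power2_eq_square)
  also have "\<dots> \<le> (p - q) * (2 * n / s)"
    using \<open>p + q \<le> 2 * n / s\<close> \<open>q \<le> p\<close> by (intro mult_left_mono) auto
  finally have "n * (c * n) \<le> n * (2 / s * (p - q))"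
    by (simp add: algebra_simps)
  then have "c * n \<le> 2 / s * (p - q)"
    using assms(4,6) \<open>q \<le> p\<close> by (cases "n = 0") (auto simp only: mult_le_cancel_left_pos, simp)
  then show ?thesis
    unfolding p_def q_def .
qed

lemma gradient_step_increase:
  fixes g :: "'a::euclidean_space \<Rightarrow> real"
  assumes dif: "\<And>z. g differentiable (at z)"
    and lip: "\<And>z w. norm (grad g z - grad g w) \<le> l * norm (z - w)"
    and eta: "l * eta = 1/6" and eta_pos: "eta > 0"
  shows "g (z + eta *\<^sub>R grad g z) \<ge> g z + 11/12 * eta * (norm (grad g z))\<^sup>2"
proof -
  have taylor: "\<bar>g (z + eta *\<^sub>R grad g z) - g z - grad g z \<bullet> (z + eta *\<^sub>R grad g z - z)\<bar>
      \<le> l / 2 * (norm (z + eta *\<^sub>R grad g z - z))\<^sup>2"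
    by (rule lipschitz_grad_taylor_bound[OF dif lip])
  have first: "grad g z \<bullet> (z + eta *\<^sub>R grad g z - z) = eta * (norm (grad g z))\<^sup>2"
    by (simp add: power2_norm_eq_inner)
  have "l / 2 * (norm (z + eta *\<^sub>R grad g z - z))\<^sup>2 = (l * eta) / 2 * eta * (norm (grad g z))\<^sup>2"
    using eta_pos by (simp add: power_mult_distrib power2_eq_square)
  then have second: "l / 2 * (norm (z + eta *\<^sub>R grad g z - z))\<^sup>2 = 1/12 * eta * (norm (grad g z))\<^sup>2"
    unfolding eta by simp
  show ?thesis
    using taylor unfolding first second abs_le_iff by linarith
qed

text \<open>Gradient ascent with step \<open>\<eta> = 1/(6l)\<close> gains at least \<open>(11/12) \<eta> \<parallel>\<nabla>g\<parallel>\<^sup>2\<close> per step (whence the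
  constant \<open>12/11\<close>), so by PL its path length is controlled by the square root of the optimality
  gap; the iterates converge to a maximiser.\<close>

lemma PL_error_bound:
  fixes g :: "'b::euclidean_space \<Rightarrow> real"
  assumes dif: "\<And>z. g differentiable (at z)"
    and lip: "\<And>z w. norm (grad g z - grad g w) \<le> l * norm (z - w)"
    and l: "l > 0" and mu: "mu > 0"
    and bnd: "\<And>z. g z \<le> m"
    and PL: "\<And>z. (norm (grad g z))\<^sup>2 \<ge> 2 * mu * (m - g z)"
  shows "\<exists>z. g z = m \<and> norm (y - z) \<le> 12 / 11 * norm (grad g y) / mu"
proof -
  define eta where "eta = 1 / (6 * l)"
  have eta: "eta > 0" "l * eta = 1/6" using l by (auto simp: eta_def)
  define Y where "Y k = ((\<lambda>z. z + eta *\<^sub>R grad g z) ^^ k) y" for k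
  have Y0: "Y 0 = y" and YS: "\<And>k. Y (Suc k) = Y k + eta *\<^sub>R grad g (Y k)"
    by (simp_all add: Y_def)
  define a where "a k = m - g (Y k)" for k
  have a_nonneg: "a k \<ge> 0" for k using bnd by (simp add: a_def)
  have PL_a: "(sqrt (2 * mu))\<^sup>2 * a k \<le> (norm (grad g (Y k)))\<^sup>2" for k
    using PL mu by (simp add: a_def)
  have ascent: "a (Suc k) \<le> a k - 11/12 * eta * (norm (grad g (Y k)))\<^sup>2" for k
    using gradient_step_increase[OF dif lip eta(2) eta(1), of "Y k"] by (simp add: a_def YS)
  define K where "K = 24 / (11 * sqrt (2 * mu))"
  have "norm (Y (Suc k) - Y k) \<le> K * sqrt (a k) - K * sqrt (a (Suc k))" for k
  proof -
    have "11/12 * eta * norm (grad g (Y k)) \<le> 2 / sqrt (2 * mu) * (sqrt (a k) - sqrt (a (Suc k)))"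
      by (rule step_le_sqrt_decrease) (use a_nonneg ascent PL_a mu eta in simp_all)
    moreover have "12/11 * (2 / sqrt (2 * mu) * (sqrt (a k) - sqrt (a (Suc k))))
        = K * sqrt (a k) - K * sqrt (a (Suc k))"
      unfolding K_def right_diff_distrib[symmetric] by simp
    moreover have "norm (Y (Suc k) - Y k) = eta * norm (grad g (Y k))"
      using eta by (simp add: YS)
    ultimately show ?thesis by linarith
  qed
  then obtain z where z: "Y \<longlonglongrightarrow> z" and dist_z: "norm (z - y) \<le> K * sqrt (a 0)"
    using convergent_if_norm_step_le_decrease[of Y "\<lambda>k. K * sqrt (a k)"] a_nonneg mu
    by (auto simp: K_def Y0)
  have "continuous_on UNIV (grad g)"
    using lip by (intro lipschitz_on_continuous_on[where L = l] lipschitz_onI) (auto simp: dist_norm l less_imp_le)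
  then have "(\<lambda>k. Y k + eta *\<^sub>R grad g (Y k)) \<longlonglongrightarrow> z + eta *\<^sub>R grad g z"
    using z by (intro tendsto_intros) (auto intro: continuous_on_tendsto_compose)
  moreover have "(\<lambda>k. Y k + eta *\<^sub>R grad g (Y k)) \<longlonglongrightarrow> z"
    using LIMSEQ_Suc[OF z] by (simp add: YS)
  ultimately have "eta *\<^sub>R grad g z = 0"
    using LIMSEQ_unique by fastforce
  then have "g z = m"
    using PL[of z] bnd[of z] eta mu by (simp add: mult_le_0_iff)
  moreover have "K * sqrt (a 0) \<le> 12 / 11 * norm (grad g y) / mu"
  proof -
    have "sqrt (2 * mu) * sqrt (a 0) \<le> norm (grad g y)"
      by (rule power2_le_imp_le) (use PL_a[of 0] a_nonneg[of 0] mu in \<open>simp_all add: Y0 power_mult_distrib\<close>)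
    then have "sqrt (a 0) \<le> norm (grad g y) / sqrt (2 * mu)"
      using mu by (simp add: field_simps)
    then have "K * sqrt (a 0) \<le> K * (norm (grad g y) / sqrt (2 * mu))"
      using mu by (intro mult_left_mono) (simp_all add: K_def)
    also have "\<dots> = 12 / 11 * norm (grad g y) / mu"
      using mu by (simp add: K_def field_simps)
    finally show ?thesis .
  qed
  ultimately show ?thesis
    using dist_z by (auto simp: norm_minus_commute)
qed

section \<open>The max function \<open>\<Phi>\<close>\<close>

locale minmax =
  fixes f :: "'a::euclidean_space \<Rightarrow> 'b::euclidean_space \<Rightarrow> real" and \<mu> l :: real
  assumes diff_x: "\<And>x y. (\<lambda>x'. f x' y) differentiable (at x)"
    and diff_y: "\<And>x y. (\<lambda>y'. f x y') differentiable (at y)"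
    and max_attained: "\<And>x. \<exists>y. \<forall>y'. f x y' \<le> f x y"
    and mu_pos: "\<mu> > 0"
    and PL: "\<And>x y. (norm (grad (\<lambda>y'. f x y') y))\<^sup>2 \<ge> 2 * \<mu> * (Phi f x - f x y)"
    and l_pos: "l > 0"
    and lip_x: "\<And>x1 x2 y1 y2. norm (grad (\<lambda>x. f x y1) x1 - grad (\<lambda>x. f x y2) x2)
                   \<le> l * (norm (x1 - x2) + norm (y1 - y2))"
    and lip_y: "\<And>x1 x2 y1 y2. norm (grad (\<lambda>y. f x1 y) y1 - grad (\<lambda>y. f x2 y) y2)
                   \<le> l * (norm (x1 - x2) + norm (y1 - y2))"
begin

definition grad_x :: "'a \<Rightarrow> 'b \<Rightarrow> 'a" where
  "grad_x x y = grad (\<lambda>x. f x y) x"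

definition grad_y :: "'a \<Rightarrow> 'b \<Rightarrow> 'b" where
  "grad_y x y = grad (\<lambda>y. f x y) y"

lemma grad_x_lipschitz: "norm (grad_x x1 y1 - grad_x x2 y2) \<le> l * (norm (x1 - x2) + norm (y1 - y2))"
  unfolding grad_x_def by (rule lip_x)

lemma grad_y_lipschitz: "norm (grad_y x1 y1 - grad_y x2 y2) \<le> l * (norm (x1 - x2) + norm (y1 - y2))"
  unfolding grad_y_def by (rule lip_y)

lemma grad_x_lipschitz_in_x: "norm (grad (\<lambda>x. f x y) z - grad (\<lambda>x. f x y) w) \<le> l * norm (z - w)"
  using grad_x_lipschitz[of z y w y] unfolding grad_x_def by simp

lemma grad_y_lipschitz_in_y: "norm (grad (\<lambda>y. f x y) z - grad (\<lambda>y. f x y) w) \<le> l * norm (z - w)"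
  using grad_y_lipschitz[of x z x w] unfolding grad_y_def by simp

lemma Phi_eq_max:
  assumes "\<forall>y'. f x y' \<le> f x y"
  shows "Phi f x = f x y"
  unfolding Phi_def using assms by (intro cSup_eq_maximum) auto

lemma f_le_Phi: "f x y \<le> Phi f x"
  using max_attained[of x] Phi_eq_max by force

lemma taylor_bound_x: "\<bar>f x' y - f x y - grad_x x y \<bullet> (x' - x)\<bar> \<le> l / 2 * (norm (x' - x))\<^sup>2"
  unfolding grad_x_def by (rule lipschitz_grad_taylor_bound[OF diff_x grad_x_lipschitz_in_x])

lemma taylor_bound_y: "\<bar>f x y' - f x y - grad_y x y \<bullet> (y' - y)\<bar> \<le> l / 2 * (norm (y' - y))\<^sup>2"
  unfolding grad_y_def by (rule lipschitz_grad_taylor_bound[OF diff_y grad_y_lipschitz_in_y])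

lemma argmax_near:
  obtains z where "\<forall>y'. f x y' \<le> f x z" and "norm (y - z) \<le> 12 / 11 * norm (grad_y x y) / \<mu>"
proof -
  obtain z where "f x z = Phi f x" and "norm (y - z) \<le> 12 / 11 * norm (grad_y x y) / \<mu>"
    using PL_error_bound[OF diff_y grad_y_lipschitz_in_y l_pos mu_pos f_le_Phi PL]
    unfolding grad_y_def by blast
  with f_le_Phi that show ?thesis by metis
qed

lemma grad_y_argmax:
  assumes "\<forall>y'. f x y' \<le> f x y"
  shows "grad_y x y = 0"
proof -
  have "((\<lambda>y. f x y) has_derivative (\<lambda>v. grad_y x y \<bullet> v)) (at y)"
    using has_derivative_grad[OF diff_y] unfolding grad_y_def .
  then have "(\<lambda>v. grad_y x y \<bullet> v) = (\<lambda>v. 0)"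
    by (rule differential_zero_maxmin[OF UNIV_I open_UNIV]) (use assms in auto)
  then have "grad_y x y \<bullet> grad_y x y = 0" by metis
  then show ?thesis by simp
qed

text \<open>\<open>\<nabla>\<^sub>y f\<close> vanishes at a maximiser and is \<open>l\<close>-Lipschitz in \<open>x\<close>, so the error bound applies.\<close>

lemma argmax_stable:
  assumes "\<forall>y'. f x y' \<le> f x y"
  obtains z where "\<forall>y'. f x' y' \<le> f x' z" and "norm (y - z) \<le> 12 / 11 * l / \<mu> * norm (x' - x)"
proof -
  obtain z where z: "\<forall>y'. f x' y' \<le> f x' z" "norm (y - z) \<le> 12 / 11 * norm (grad_y x' y) / \<mu>"
    using argmax_near by blast
  have "norm (grad_y x' y) \<le> l * norm (x' - x)"
    using grad_y_lipschitz[of x' y x y] grad_y_argmax[OF assms] by simp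
  then have "12 / 11 * norm (grad_y x' y) / \<mu> \<le> 12 / 11 * l / \<mu> * norm (x' - x)"
    using mu_pos by (simp add: divide_right_mono)
  with z that show ?thesis by force
qed

lemma Phi_taylor_bound:
  assumes ys: "\<forall>y'. f x y' \<le> f x ys"
  shows "\<bar>Phi f x' - Phi f x - grad_x x ys \<bullet> (x' - x)\<bar> \<le> (l / 2 + 12 / 11 * l\<^sup>2 / \<mu>) * (norm (x' - x))\<^sup>2"
proof -
  have Phi_x: "Phi f x = f x ys" by (rule Phi_eq_max[OF ys])
  have lower: "Phi f x' \<ge> Phi f x + grad_x x ys \<bullet> (x' - x) - l / 2 * (norm (x' - x))\<^sup>2"
    using f_le_Phi[of x' ys] taylor_bound_x[of x' ys x] Phi_x unfolding abs_le_iff by linarith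
  obtain z where z: "\<forall>y'. f x' y' \<le> f x' z" "norm (ys - z) \<le> 12 / 11 * l / \<mu> * norm (x' - x)"
    using argmax_stable[OF ys] by blast
  have "norm (grad_x x z - grad_x x ys) \<le> l * norm (ys - z)"
    using grad_x_lipschitz[of x z x ys] by (simp add: norm_minus_commute)
  also have "\<dots> \<le> l * (12 / 11 * l / \<mu> * norm (x' - x))"
    using z(2) l_pos by (intro mult_left_mono) auto
  finally have "(grad_x x z - grad_x x ys) \<bullet> (x' - x) \<le> (l * (12 / 11 * l / \<mu> * norm (x' - x))) * norm (x' - x)"
    using norm_cauchy_schwarz[of "grad_x x z - grad_x x ys" "x' - x"] by (meson mult_right_mono norm_ge_zero order_trans)
  then have "(grad_x x z - grad_x x ys) \<bullet> (x' - x) \<le> 12 / 11 * l\<^sup>2 / \<mu> * (norm (x' - x))\<^sup>2"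
    by (simp add: power2_eq_square)
  then have upper: "Phi f x' \<le> Phi f x + grad_x x ys \<bullet> (x' - x) + (l / 2 + 12 / 11 * l\<^sup>2 / \<mu>) * (norm (x' - x))\<^sup>2"
    using Phi_eq_max[OF z(1)] taylor_bound_x[of x' z x] f_le_Phi[of x z]
    unfolding abs_le_iff by (simp add: inner_diff_left algebra_simps)
  have "l / 2 * (norm (x' - x))\<^sup>2 \<le> (l / 2 + 12 / 11 * l\<^sup>2 / \<mu>) * (norm (x' - x))\<^sup>2"
    using mu_pos by (intro mult_right_mono) auto
  with lower upper show ?thesis unfolding abs_le_iff by linarith
qed

lemma has_derivative_Phi:
  assumes ys: "\<forall>y'. f x y' \<le> f x ys"
  shows "(Phi f has_derivative (\<lambda>h. grad_x x ys \<bullet> h)) (at x)"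
  unfolding has_derivative_at_alt
proof (intro conjI allI impI)
  define C where "C = l / 2 + 12 / 11 * l\<^sup>2 / \<mu>"
  have C: "C > 0" using l_pos mu_pos by (simp add: C_def add_pos_nonneg)
  show "bounded_linear ((\<bullet>) (grad_x x ys))" by (rule bounded_linear_inner_right)
  fix e :: real assume e: "e > 0"
  show "\<exists>d>0. \<forall>y. norm (y - x) < d \<longrightarrow> norm (Phi f y - Phi f x - grad_x x ys \<bullet> (y - x)) \<le> e * norm (y - x)"
  proof (intro exI[of _ "e / C"] conjI allI impI)
    fix y assume y: "norm (y - x) < e / C"
    have "norm (Phi f y - Phi f x - grad_x x ys \<bullet> (y - x)) \<le> (C * norm (y - x)) * norm (y - x)"
      using Phi_taylor_bound[OF ys, of y] by (simp add: C_def power2_eq_square)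
    also have "\<dots> \<le> e * norm (y - x)"
      using y C by (intro mult_right_mono) (auto simp: field_simps)
    finally show "norm (Phi f y - Phi f x - grad_x x ys \<bullet> (y - x)) \<le> e * norm (y - x)" .
  qed (use e C in simp)
qed

lemma grad_Phi:
  assumes "\<forall>y'. f x y' \<le> f x ys"
  shows "grad (Phi f) x = grad_x x ys"
  by (rule grad_eqI[OF has_derivative_Phi[OF assms]])

lemma differentiable_Phi: "Phi f differentiable (at x)"
  using max_attained[of x] has_derivative_Phi differentiable_def by blast

definition L_Phi :: real where
  "L_Phi = l + 12 / 11 * l\<^sup>2 / \<mu>"

lemma grad_Phi_lipschitz: "norm (grad (Phi f) x1 - grad (Phi f) x2) \<le> L_Phi * norm (x1 - x2)"
proof -
  obtain y1 where y1: "\<forall>y'. f x1 y' \<le> f x1 y1" using max_attained by blast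
  obtain z where z: "\<forall>y'. f x2 y' \<le> f x2 z" "norm (y1 - z) \<le> 12 / 11 * l / \<mu> * norm (x2 - x1)"
    using argmax_stable[OF y1] by blast
  have "norm (grad (Phi f) x1 - grad (Phi f) x2) = norm (grad_x x1 y1 - grad_x x2 z)"
    using grad_Phi[OF y1] grad_Phi[OF z(1)] by simp
  also have "\<dots> \<le> l * (norm (x1 - x2) + norm (y1 - z))" by (rule grad_x_lipschitz)
  also have "\<dots> \<le> l * (norm (x1 - x2) + 12 / 11 * l / \<mu> * norm (x1 - x2))"
    using z(2) l_pos by (intro mult_left_mono add_left_mono) (auto simp: norm_minus_commute)
  also have "\<dots> = L_Phi * norm (x1 - x2)"
    unfolding L_Phi_def by (simp add: algebra_simps power2_eq_square)
  finally show ?thesis .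
qed

lemma Phi_descent: "Phi f x' \<le> Phi f x + grad (Phi f) x \<bullet> (x' - x) + L_Phi / 2 * (norm (x' - x))\<^sup>2"
  using lipschitz_grad_taylor_bound[OF differentiable_Phi grad_Phi_lipschitz, of x' x]
  unfolding abs_le_iff by linarith

lemma grad_Phi_near_grad_x: "norm (grad (Phi f) x - grad_x x y) \<le> 12 / 11 * l / \<mu> * norm (grad_y x y)"
proof -
  obtain z where z: "\<forall>y'. f x y' \<le> f x z" "norm (y - z) \<le> 12 / 11 * norm (grad_y x y) / \<mu>"
    using argmax_near by blast
  have "norm (grad (Phi f) x - grad_x x y) = norm (grad_x x z - grad_x x y)"
    using grad_Phi[OF z(1)] by simp
  also have "\<dots> \<le> l * norm (z - y)"
    using grad_x_lipschitz[of x z x y] by simp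
  also have "\<dots> \<le> l * (12 / 11 * norm (grad_y x y) / \<mu>)"
    using z(2) l_pos by (intro mult_left_mono) (auto simp: norm_minus_commute)
  finally show ?thesis by simp
qed

lemma grad_y_norm_shift:
  "(norm (grad_y x y))\<^sup>2 \<le> 2 * (norm (grad_y x' y))\<^sup>2 + 2 * (l\<^sup>2 * (norm (x' - x))\<^sup>2)"
proof -
  let ?H = "grad_y x y" and ?H' = "grad_y x' y"
  have "norm (?H - ?H') \<le> l * norm (x' - x)"
    using grad_y_lipschitz[of x y x' y] by (simp add: norm_minus_commute)
  then have "(norm (?H - ?H'))\<^sup>2 \<le> l\<^sup>2 * (norm (x' - x))\<^sup>2"
    by (metis norm_ge_zero power_mono power_mult_distrib)
  moreover have "(norm ?H)\<^sup>2 \<le> 2 * (norm ?H')\<^sup>2 + 2 * (norm (?H - ?H'))\<^sup>2"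
    using zero_le_power2[of "norm ?H' - norm (?H - ?H')"]
      power_mono[OF norm_triangle_sub[of ?H ?H'] norm_ge_zero, of 2]
    by (simp add: power2_eq_square algebra_simps)
  ultimately show ?thesis by linarith
qed

lemma abs_f_diff_le:
  assumes rx: "norm (x - x0) \<le> r" and ry: "norm (y - y0) \<le> r"
  shows "\<bar>f x y - f x0 y0\<bar> \<le> (norm (grad_x x0 y0) + norm (grad_y x0 y0)) * r + 2 * l * r\<^sup>2"
proof -
  have r0: "r \<ge> 0" using rx norm_ge_zero order_trans by blast
  have sqx: "(norm (x - x0))\<^sup>2 \<le> r\<^sup>2" and sqy: "(norm (y - y0))\<^sup>2 \<le> r\<^sup>2"
    using rx ry by (simp_all add: power_mono)
  have ng: "norm (grad_y x y0) \<le> norm (grad_y x0 y0) + l * r"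
  proof -
    have "norm (grad_y x y0 - grad_y x0 y0) \<le> l * r"
      using grad_y_lipschitz[of x y0 x0 y0] rx l_pos by (simp add: order_trans mult_left_mono)
    then show ?thesis using norm_triangle_sub[of "grad_y x y0" "grad_y x0 y0"] by linarith
  qed
  have "\<bar>f x y - f x y0\<bar> \<le> \<bar>grad_y x y0 \<bullet> (y - y0)\<bar> + l / 2 * (norm (y - y0))\<^sup>2"
    using taylor_bound_y[of x y y0] by linarith
  also have "\<bar>grad_y x y0 \<bullet> (y - y0)\<bar> \<le> norm (grad_y x y0) * norm (y - y0)"
    by (rule Cauchy_Schwarz_ineq2)
  also have "norm (grad_y x y0) * norm (y - y0) \<le> (norm (grad_y x0 y0) + l * r) * r"
    using ng ry r0 l_pos by (intro mult_mono) auto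
  also have "l / 2 * (norm (y - y0))\<^sup>2 \<le> l / 2 * r\<^sup>2"
    using sqy l_pos by (intro mult_left_mono) auto
  finally have y_part: "\<bar>f x y - f x y0\<bar> \<le> (norm (grad_y x0 y0) + l * r) * r + l / 2 * r\<^sup>2" by simp
  have "\<bar>f x y0 - f x0 y0\<bar> \<le> \<bar>grad_x x0 y0 \<bullet> (x - x0)\<bar> + l / 2 * (norm (x - x0))\<^sup>2"
    using taylor_bound_x[of x y0 x0] by linarith
  also have "\<bar>grad_x x0 y0 \<bullet> (x - x0)\<bar> \<le> norm (grad_x x0 y0) * norm (x - x0)"
    by (rule Cauchy_Schwarz_ineq2)
  also have "norm (grad_x x0 y0) * norm (x - x0) \<le> norm (grad_x x0 y0) * r"
    using rx by (intro mult_left_mono) auto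
  also have "l / 2 * (norm (x - x0))\<^sup>2 \<le> l / 2 * r\<^sup>2"
    using sqx l_pos by (intro mult_left_mono) auto
  finally have x_part: "\<bar>f x y0 - f x0 y0\<bar> \<le> norm (grad_x x0 y0) * r + l / 2 * r\<^sup>2" by simp
  have "(norm (grad_y x0 y0) + l * r) * r + l / 2 * r\<^sup>2 + (norm (grad_x x0 y0) * r + l / 2 * r\<^sup>2)
      = (norm (grad_x x0 y0) + norm (grad_y x0 y0)) * r + 2 * l * r\<^sup>2"
    by (simp add: algebra_simps power2_eq_square)
  with x_part y_part show ?thesis by linarith
qed

lemma continuous_on_f: "continuous_on UNIV (\<lambda>p. f (fst p) (snd p))"
proof -
  have "isCont (\<lambda>p. f (fst p) (snd p)) (x0, y0)" for x0 y0
  proof -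
    define M where "M = norm (grad_x x0 y0) + norm (grad_y x0 y0)"
    define B where "B p = M * dist p (x0, y0) + 2 * l * (dist p (x0, y0))\<^sup>2" for p
    have bound: "norm (f (fst p) (snd p) - f x0 y0) \<le> B p" for p
      using abs_f_diff_le[of "fst p" x0 "dist p (x0, y0)" "snd p" y0]
        dist_fst_le[of p "(x0, y0)"] dist_snd_le[of p "(x0, y0)"]
      by (simp add: B_def M_def dist_norm)
    have "(B \<longlongrightarrow> M * dist (x0, y0) (x0, y0) + 2 * l * (dist (x0, y0) (x0, y0))\<^sup>2) (at (x0, y0))"
      unfolding B_def by (intro tendsto_intros)
    then have "((\<lambda>p. f (fst p) (snd p) - f x0 y0) \<longlongrightarrow> 0) (at (x0, y0))"
      using Lim_null_comparison[OF always_eventually[OF allI[OF bound]]] by simp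
    then show ?thesis
      unfolding isCont_def by (simp add: LIM_zero_iff)
  qed
  then show ?thesis by (simp add: continuous_at_imp_continuous_on)
qed

lemma continuous_on_f_compose [continuous_intros]:
  assumes "continuous_on S a" "continuous_on S b"
  shows "continuous_on S (\<lambda>z. f (a z) (b z))"
  using continuous_on_compose2[OF continuous_on_f continuous_on_Pair[OF assms]] by simp

lemma continuous_on_Phi_compose [continuous_intros]:
  "continuous_on S a \<Longrightarrow> continuous_on S (\<lambda>z. Phi f (a z))"
  using continuous_on_compose2[of UNIV "Phi f"] differentiable_Phi
  by (simp add: differentiable_imp_continuous_on differentiable_on_def differentiable_at_withinI)

lemma continuous_on_grad_Phi_compose [continuous_intros]:
  "continuous_on S a \<Longrightarrow> continuous_on S (\<lambda>z. grad (Phi f) (a z))"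
proof -
  have "L_Phi-lipschitz_on UNIV (grad (Phi f))"
    using grad_Phi_lipschitz l_pos mu_pos by (intro lipschitz_onI) (simp_all add: dist_norm L_Phi_def)
  then show "continuous_on S a \<Longrightarrow> continuous_on S (\<lambda>z. grad (Phi f) (a z))"
    using continuous_on_compose2[of UNIV "grad (Phi f)" S a] lipschitz_on_continuous_on by blast
qed

end

section \<open>The zeroth-order gradient estimator\<close>

definition zo_coeff :: "('a::euclidean_space \<Rightarrow> real) \<Rightarrow> real \<Rightarrow> 'a \<Rightarrow> 'a \<Rightarrow> real" where
  "zo_coeff \<phi> m x u = (\<phi> (x + m *\<^sub>R u) - \<phi> x) / (m / real DIM('a))"

lemma continuous_on_zo_coeff:
  fixes \<phi> :: "'a::euclidean_space \<Rightarrow> real"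
  assumes "continuous_on UNIV \<phi>"
  shows "continuous_on UNIV (zo_coeff \<phi> m x)"
  unfolding zo_coeff_def divide_inverse
  by (intro continuous_intros continuous_on_compose2[OF assms]) auto

lemma square_add_le:
  fixes a b eps :: real
  assumes "eps > 0"
  shows "(a + b)\<^sup>2 \<le> (1 + eps) * a\<^sup>2 + (1 + 1 / eps) * b\<^sup>2"
proof -
  have "0 \<le> (eps * a - b)\<^sup>2 / eps" using assms by simp
  also have "\<dots> = eps * a\<^sup>2 - 2 * a * b + b\<^sup>2 / eps"
    using assms by (simp add: field_simps power2_eq_square)
  finally show ?thesis by (simp add: power2_eq_square field_simps)
qed

context
  fixes \<phi> :: "'a::euclidean_space \<Rightarrow> real" and x :: 'a and m l :: real
  assumes dif: "\<And>z. \<phi> differentiable (at z)"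
    and lip: "\<And>z w. norm (grad \<phi> z - grad \<phi> w) \<le> l * norm (z - w)"
    and m: "m > 0" and l_nonneg: "l \<ge> 0"
begin

lemma continuous_on_zo_coeff_of_differentiable:
  "continuous_on UNIV (zo_coeff \<phi> m x)"
  using dif by (intro continuous_on_zo_coeff differentiable_imp_continuous_on)
    (simp add: differentiable_on_def differentiable_at_withinI)

lemma zo_coeff_approx:
  assumes "norm u = 1"
  shows "\<bar>zo_coeff \<phi> m x u - real DIM('a) * (grad \<phi> x \<bullet> u)\<bar> \<le> real DIM('a) * l * m / 2"
proof -
  have "zo_coeff \<phi> m x u - real DIM('a) * (grad \<phi> x \<bullet> u)
      = real DIM('a) / m * (\<phi> (x + m *\<^sub>R u) - \<phi> x - grad \<phi> x \<bullet> ((x + m *\<^sub>R u) - x))"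
    unfolding zo_coeff_def using m by (simp add: field_simps)
  also have "\<bar>\<dots>\<bar> = real DIM('a) / m * \<bar>\<phi> (x + m *\<^sub>R u) - \<phi> x - grad \<phi> x \<bullet> ((x + m *\<^sub>R u) - x)\<bar>"
    using m by (simp add: abs_mult)
  also have "\<dots> \<le> real DIM('a) / m * (l / 2 * (norm (m *\<^sub>R u))\<^sup>2)"
    using m lipschitz_grad_taylor_bound[OF dif lip, of "x + m *\<^sub>R u" x]
    by (intro mult_left_mono) auto
  also have "\<dots> = real DIM('a) * l * m / 2"
    using assms m by (simp add: power2_eq_square)
  finally show ?thesis .
qed

lemma integral_zo_coeff_inner:
  "\<bar>(\<integral>u. zo_coeff \<phi> m x u * (w \<bullet> u) \<partial>unif_sphere) - grad \<phi> x \<bullet> w\<bar> \<le> norm w * (real DIM('a) * l * m / 2)"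
proof -
  interpret prob_space "unif_sphere :: 'a measure" by (rule prob_space_unif_sphere)
  have bound_nonneg: "0 \<le> real DIM('a) * l * m / 2"
    using l_nonneg m by simp
  define e where "e u = (zo_coeff \<phi> m x u - real DIM('a) * (grad \<phi> x \<bullet> u)) * (w \<bullet> u)" for u
  have int_e: "integrable unif_sphere e"
    unfolding e_def by (intro integrable_unif_sphere_continuous continuous_intros continuous_on_zo_coeff_of_differentiable)
  have "(\<integral>u. zo_coeff \<phi> m x u * (w \<bullet> u) \<partial>unif_sphere)
      = (\<integral>u. real DIM('a) * ((grad \<phi> x \<bullet> u) * (w \<bullet> u)) + e u \<partial>unif_sphere)"
    unfolding e_def by (simp add: algebra_simps)
  also have "\<dots> = grad \<phi> x \<bullet> w + (\<integral>u. e u \<partial>unif_sphere)"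
    using int_e integrable_unif_sphere_inner_mult_inner[of "grad \<phi> x" w]
    by (simp add: integral_unif_sphere_inner_mult_inner)
  finally have eq: "(\<integral>u. zo_coeff \<phi> m x u * (w \<bullet> u) \<partial>unif_sphere) - grad \<phi> x \<bullet> w = (\<integral>u. e u \<partial>unif_sphere)"
    by simp
  have bound: "AE u in unif_sphere. \<bar>e u\<bar> \<le> norm w * (real DIM('a) * l * m / 2)"
    using AE_unif_sphere_norm
  proof eventually_elim
    case (elim u)
    have "\<bar>e u\<bar> = \<bar>zo_coeff \<phi> m x u - real DIM('a) * (grad \<phi> x \<bullet> u)\<bar> * \<bar>w \<bullet> u\<bar>"
      by (simp add: e_def abs_mult)
    also have "\<dots> \<le> real DIM('a) * l * m / 2 * norm w"
      by (rule mult_mono[OF zo_coeff_approx[OF elim] _ bound_nonneg abs_ge_zero])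
         (use Cauchy_Schwarz_ineq2[of w u] elim in simp)
    finally have "\<bar>e u\<bar> \<le> real DIM('a) * l * m / 2 * norm w" .
    then show ?case by (simp add: mult.commute)
  qed
  have "AE u in unif_sphere. e u \<le> norm w * (real DIM('a) * l * m / 2)"
    using bound by eventually_elim (simp add: abs_le_iff)
  then have "(\<integral>u. e u \<partial>unif_sphere) \<le> norm w * (real DIM('a) * l * m / 2)"
    by (rule integral_le_const[OF int_e])
  moreover have "AE u in unif_sphere. - (norm w * (real DIM('a) * l * m / 2)) \<le> e u"
    using bound by eventually_elim (simp add: abs_le_iff)
  then have "- (norm w * (real DIM('a) * l * m / 2)) \<le> (\<integral>u. e u \<partial>unif_sphere)"
    by (rule integral_ge_const[OF int_e])
  ultimately show ?thesis
    unfolding eq abs_le_iff by linarith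
qed

lemma integral_zo_coeff_square:
  fixes eps :: real
  assumes eps: "eps > 0"
  shows "(\<integral>u. (zo_coeff \<phi> m x u)\<^sup>2 \<partial>unif_sphere) \<le> (1 + eps) * real DIM('a) * (norm (grad \<phi> x))\<^sup>2
            + (1 + 1 / eps) * (real DIM('a))\<^sup>2 * l\<^sup>2 * m\<^sup>2 / 4"
proof -
  interpret prob_space "unif_sphere :: 'a measure" by (rule prob_space_unif_sphere)
  define C where "C = (1 + 1 / eps) * (real DIM('a))\<^sup>2 * l\<^sup>2 * m\<^sup>2 / 4"
  define Q where "Q u = (1 + eps) * (real DIM('a))\<^sup>2 * ((grad \<phi> x \<bullet> u) * (grad \<phi> x \<bullet> u))" for u
  have "(\<integral>u. (zo_coeff \<phi> m x u)\<^sup>2 \<partial>unif_sphere) \<le> (\<integral>u. Q u + C \<partial>unif_sphere)"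
  proof (rule integral_mono_AE)
    show "AE u in unif_sphere. (zo_coeff \<phi> m x u)\<^sup>2 \<le> Q u + C"
      using AE_unif_sphere_norm
    proof eventually_elim
      case (elim u)
      define r where "r = zo_coeff \<phi> m x u - real DIM('a) * (grad \<phi> x \<bullet> u)"
      have "\<bar>r\<bar>\<^sup>2 \<le> (real DIM('a) * l * m / 2)\<^sup>2"
        by (rule power_mono) (use zo_coeff_approx[OF elim] in \<open>simp_all add: r_def\<close>)
      then have "r\<^sup>2 \<le> (real DIM('a) * l * m / 2)\<^sup>2"
        by simp
      then have "(1 + 1 / eps) * r\<^sup>2 \<le> (1 + 1 / eps) * (real DIM('a) * l * m / 2)\<^sup>2"
        using eps by (intro mult_left_mono) auto
      then have "(1 + 1 / eps) * r\<^sup>2 \<le> C"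
        by (simp add: C_def power_divide power_mult_distrib)
      moreover have "(zo_coeff \<phi> m x u)\<^sup>2 \<le> (1 + eps) * (real DIM('a) * (grad \<phi> x \<bullet> u))\<^sup>2 + (1 + 1 / eps) * r\<^sup>2"
        using square_add_le[OF eps, of "real DIM('a) * (grad \<phi> x \<bullet> u)" r] by (simp add: r_def)
      ultimately show ?case
        by (simp add: Q_def power2_eq_square algebra_simps)
    qed
  qed (use continuous_on_zo_coeff_of_differentiable in \<open>auto simp: Q_def intro!: integrable_unif_sphere_continuous continuous_intros\<close>)
  also have "(\<integral>u. Q u + C \<partial>unif_sphere) = (1 + eps) * (real DIM('a))\<^sup>2 * ((grad \<phi> x \<bullet> grad \<phi> x) / real DIM('a)) + C"
    using integrable_unif_sphere_inner_mult_inner[of "grad \<phi> x" "grad \<phi> x"] prob_space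
    by (simp add: Q_def integral_unif_sphere_inner_mult_inner)
  also have "\<dots> = (1 + eps) * real DIM('a) * (norm (grad \<phi> x))\<^sup>2 + C"
    by (simp add: power2_norm_eq_inner power2_eq_square[of "real DIM('a)"])
  finally show ?thesis unfolding C_def .
qed

end

section \<open>One step of ZO-AGDA\<close>

lemma ascent_arith:
  fixes \<beta> l d2 \<mu>2 h I1 I2 R :: real
  assumes "\<beta> > 0" "l > 0" "d2 \<ge> 1" "h \<ge> 0" and lbd: "l * \<beta> * d2 \<le> 1/4"
    and I1: "I1 \<ge> h\<^sup>2 - h * (d2 * l * \<mu>2 / 2)"
    and I2: "I2 \<le> 2 * d2 * h\<^sup>2 + 2 * d2\<^sup>2 * l\<^sup>2 * \<mu>2\<^sup>2 / 4"
    and R: "R \<ge> \<beta> * I1 - l / 2 * \<beta>\<^sup>2 * I2"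
  shows "R \<ge> \<beta> / 2 * h\<^sup>2 - 5/16 * \<beta> * d2\<^sup>2 * l\<^sup>2 * \<mu>2\<^sup>2"
proof -
  have "\<beta> * I1 \<ge> \<beta> * h\<^sup>2 - \<beta> / 2 * (h * (d2 * l * \<mu>2))"
    using mult_left_mono[OF I1, of \<beta>] assms(1) by (simp add: algebra_simps)
  moreover have "h * (d2 * l * \<mu>2) \<le> h\<^sup>2 / 2 + (d2 * l * \<mu>2)\<^sup>2 / 2"
    using sum_squares_bound[of h "d2 * l * \<mu>2"] by (simp add: power2_eq_square)
  then have "\<beta> / 2 * (h * (d2 * l * \<mu>2)) \<le> \<beta> / 4 * h\<^sup>2 + \<beta> / 4 * (d2\<^sup>2 * l\<^sup>2 * \<mu>2\<^sup>2)"
    using mult_left_mono[of _ _ "\<beta> / 2"] assms(1) by (fastforce simp: power_mult_distrib algebra_simps)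
  moreover have "l / 2 * \<beta>\<^sup>2 * I2 \<le> (l * \<beta> * d2) * (\<beta> * h\<^sup>2) + (l * \<beta> * d2) * (\<beta> * d2 * l\<^sup>2 * \<mu>2\<^sup>2 / 4)"
    using mult_left_mono[OF I2, of "l / 2 * \<beta>\<^sup>2"] assms(1,2) by (simp add: power2_eq_square algebra_simps)
  moreover have "(l * \<beta> * d2) * (\<beta> * h\<^sup>2) \<le> 1/4 * (\<beta> * h\<^sup>2)"
    using lbd assms by (intro mult_right_mono) auto
  moreover have "(l * \<beta> * d2) * (\<beta> * d2 * l\<^sup>2 * \<mu>2\<^sup>2 / 4) \<le> 1/16 * (\<beta> * d2\<^sup>2 * l\<^sup>2 * \<mu>2\<^sup>2)"
  proof -
    have "(l * \<beta> * d2) * (\<beta> * d2 * l\<^sup>2 * \<mu>2\<^sup>2 / 4) \<le> 1/4 * (\<beta> * d2 * l\<^sup>2 * \<mu>2\<^sup>2 / 4)"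
      using lbd assms by (intro mult_right_mono) auto
    also have "\<dots> \<le> 1/16 * (\<beta> * d2\<^sup>2 * l\<^sup>2 * \<mu>2\<^sup>2)"
      using assms by (simp add: power2_eq_square mult_right_mono)
    finally show ?thesis .
  qed
  ultimately show ?thesis
    using R by linarith
qed

lemma potential_bracket_arith:
  fixes A D P E :: real
  assumes "A \<ge> 0" "D \<ge> 0" "\<bar>P\<bar> \<le> A * D"
  shows "A\<^sup>2 + P / 2 - D\<^sup>2 / 2 - (A + D / 2) * E - 1029/3520 * (A\<^sup>2 + 2 * P + D\<^sup>2) + 121/36 * D\<^sup>2
         \<ge> A\<^sup>2 / 4 - 11/16 * E\<^sup>2"
proof -
  have "A * E \<le> 2/5 * A\<^sup>2 + 5/8 * E\<^sup>2"
    using zero_le_power2[of "A - 5/4 * E"] by (simp add: power2_eq_square algebra_simps)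
  moreover have "D * E \<le> 2 * D\<^sup>2 + 1/8 * E\<^sup>2"
    using zero_le_power2[of "D - 1/4 * E"] by (simp add: power2_eq_square algebra_simps)
  moreover have "A * D \<le> 1/2 * A\<^sup>2 + 1/2 * D\<^sup>2"
    using zero_le_power2[of "A - D"] by (simp add: power2_eq_square algebra_simps)
  ultimately show ?thesis
    using assms(3) zero_le_power2[of A] zero_le_power2[of D] unfolding abs_le_iff
    by (simp add: algebra_simps) (insert zero_le_power2[of A] zero_le_power2[of D], argo)
qed

locale zo_agda_setup = minmax f \<mu> l for f :: "'a::euclidean_space \<Rightarrow> 'b::euclidean_space \<Rightarrow> real" and \<mu> l +
  fixes \<alpha> \<beta> \<mu>1 \<mu>2 :: real
  assumes alpha_pos: "\<alpha> > 0" and beta_pos: "\<beta> > 0" and mu1_pos: "\<mu>1 > 0" and mu2_pos: "\<mu>2 > 0"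
    and beta_le: "\<beta> \<le> 1 / (4 * real DIM('b) * (l + l\<^sup>2 / (2 * \<mu>)))"
    and alpha_le: "\<alpha> \<le> min (\<beta> / (32 * (l / \<mu>)\<^sup>2)) (1 / (10 * real DIM('a) * (l + l\<^sup>2 / (2 * \<mu>))))"
begin

definition x_next :: "'a \<Rightarrow> 'b \<Rightarrow> 'a \<Rightarrow> 'a" where
  "x_next x y u = x - (\<alpha> * zo_coeff (\<lambda>x. f x y) \<mu>1 x u) *\<^sub>R u"

definition y_next :: "'a \<Rightarrow> 'b \<Rightarrow> 'b \<Rightarrow> 'b" where
  "y_next x' y v = y + (\<beta> * zo_coeff (f x') \<mu>2 y v) *\<^sub>R v"

definition zo_step :: "'a \<times> 'b \<Rightarrow> 'a \<times> 'b \<Rightarrow> 'a \<times> 'b" where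
  "zo_step p w = (let x' = x_next (fst p) (snd p) (fst w) in (x', y_next x' (snd p) (snd w)))"

definition potential :: "'a \<times> 'b \<Rightarrow> real" where
  "potential p = 3/2 * Phi f (fst p) - 1/2 * f (fst p) (snd p)"

definition L :: real where
  "L = l + l\<^sup>2 / (2 * \<mu>)"

lemma zo_agda_Suc: "zo_agda f \<alpha> \<beta> \<mu>1 \<mu>2 x0 y0 \<omega> (Suc t) = zo_step (zo_agda f \<alpha> \<beta> \<mu>1 \<mu>2 x0 y0 \<omega> t) (\<omega> t)"
  by (simp add: zo_step_def x_next_def y_next_def zo_coeff_def Let_def)

lemma continuous_on_zo_step: "continuous_on UNIV (\<lambda>q. zo_step (fst q) (snd q))"
  unfolding zo_step_def x_next_def y_next_def zo_coeff_def divide_inverse Let_def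
  by (intro continuous_intros)

lemma continuous_on_potential: "continuous_on UNIV potential"
  unfolding potential_def by (intro continuous_intros)

lemma l_le_L: "l \<le> L"
  using mu_pos by (simp add: L_def)

lemma L_pos: "L > 0"
  using l_le_L l_pos by linarith

lemma beta_l_d2_le: "l * \<beta> * real DIM('b) \<le> 1/4"
proof -
  have "\<beta> * (4 * real DIM('b) * L) \<le> 1"
    using beta_le L_pos unfolding L_def[symmetric] by (simp add: pos_le_divide_eq)
  moreover have "l * \<beta> * real DIM('b) \<le> L * \<beta> * real DIM('b)"
    using l_le_L beta_pos by (intro mult_right_mono) auto
  ultimately show ?thesis by (simp add: algebra_simps)
qed

lemma beta_l2_le: "\<beta> * l\<^sup>2 \<le> L / 4"
proof -
  have "\<beta> * l\<^sup>2 * 1 \<le> \<beta> * l\<^sup>2 * real DIM('b)"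
    by (rule mult_left_mono) (use beta_pos in auto)
  also have "\<dots> = (l * \<beta> * real DIM('b)) * l"
    by (simp add: power2_eq_square)
  also have "\<dots> \<le> 1/4 * l"
    by (rule mult_right_mono[OF beta_l_d2_le]) (use l_pos in simp)
  finally show ?thesis
    using l_le_L by simp
qed

lemma alpha_d1_L_le: "\<alpha> * real DIM('a) * L \<le> 1 / 10"
proof -
  have "\<alpha> \<le> 1 / (10 * real DIM('a) * L)"
    using alpha_le unfolding L_def by simp
  then show ?thesis
    using L_pos by (simp add: pos_le_divide_eq mult_ac)
qed

lemma alpha_kappa_le: "4 * \<alpha> * (l / \<mu>)\<^sup>2 \<le> \<beta> / 8"
proof -
  have "\<alpha> \<le> \<beta> / (32 * (l / \<mu>)\<^sup>2)"
    using alpha_le by simp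
  then show ?thesis
    using l_pos mu_pos by (simp add: pos_le_divide_eq mult_ac)
qed

lemma continuous_on_zo_coeff_y: "continuous_on UNIV (zo_coeff (f x') \<mu>2 y)"
  by (intro continuous_on_zo_coeff continuous_intros)

lemma continuous_on_zo_coeff_x: "continuous_on UNIV (zo_coeff (\<lambda>x. f x y) \<mu>1 x)"
  by (intro continuous_on_zo_coeff continuous_intros)

lemma integral_f_y_next_gain:
  "(\<integral>v. f x' (y_next x' y v) - f x' y \<partial>unif_sphere)
     \<ge> \<beta> / 2 * (norm (grad_y x' y))\<^sup>2 - 5/16 * \<beta> * (real DIM('b))\<^sup>2 * l\<^sup>2 * \<mu>2\<^sup>2"
proof -
  interpret prob_space "unif_sphere :: 'b measure" by (rule prob_space_unif_sphere)
  define H where "H = grad_y x' y"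
  define s where "s = zo_coeff (f x') \<mu>2 y"
  have s_cont: "continuous_on UNIV s"
    unfolding s_def by (rule continuous_on_zo_coeff_y)
  have "(\<integral>v. \<beta> * (s v * (H \<bullet> v)) - l / 2 * \<beta>\<^sup>2 * (s v)\<^sup>2 \<partial>unif_sphere)
      \<le> (\<integral>v. f x' (y_next x' y v) - f x' y \<partial>unif_sphere)"
  proof (rule integral_mono_AE)
    show "AE v in unif_sphere. \<beta> * (s v * (H \<bullet> v)) - l / 2 * \<beta>\<^sup>2 * (s v)\<^sup>2 \<le> f x' (y_next x' y v) - f x' y"
      using AE_unif_sphere_norm
    proof eventually_elim
      case (elim v)
      have "grad_y x' y \<bullet> (y_next x' y v - y) = \<beta> * (s v * (H \<bullet> v))"
        by (simp add: y_next_def s_def H_def)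
      moreover have "(norm (y_next x' y v - y))\<^sup>2 = \<beta>\<^sup>2 * (s v)\<^sup>2"
        using elim by (simp add: y_next_def s_def power_mult_distrib)
      ultimately show ?case
        using taylor_bound_y[of x' "y_next x' y v" y] unfolding abs_le_iff by (simp only:) linarith
    qed
  qed (use s_cont in \<open>auto intro!: integrable_unif_sphere_continuous continuous_intros simp: y_next_def s_def\<close>)
  also have "(\<integral>v. \<beta> * (s v * (H \<bullet> v)) - l / 2 * \<beta>\<^sup>2 * (s v)\<^sup>2 \<partial>unif_sphere)
      = \<beta> * (\<integral>v. s v * (H \<bullet> v) \<partial>unif_sphere) - l / 2 * \<beta>\<^sup>2 * (\<integral>v. (s v)\<^sup>2 \<partial>unif_sphere)"
    using s_cont by (simp add: integrable_unif_sphere_continuous continuous_intros)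
  finally have R: "\<beta> * (\<integral>v. s v * (H \<bullet> v) \<partial>unif_sphere) - l / 2 * \<beta>\<^sup>2 * (\<integral>v. (s v)\<^sup>2 \<partial>unif_sphere)
      \<le> (\<integral>v. f x' (y_next x' y v) - f x' y \<partial>unif_sphere)" .
  have "\<bar>(\<integral>v. s v * (H \<bullet> v) \<partial>unif_sphere) - H \<bullet> H\<bar> \<le> norm H * (real DIM('b) * l * \<mu>2 / 2)"
    using integral_zo_coeff_inner[OF diff_y grad_y_lipschitz_in_y mu2_pos less_imp_le[OF l_pos]]
    unfolding s_def H_def grad_y_def .
  then have I1: "(\<integral>v. s v * (H \<bullet> v) \<partial>unif_sphere) \<ge> (norm H)\<^sup>2 - norm H * (real DIM('b) * l * \<mu>2 / 2)"
    unfolding power2_norm_eq_inner abs_le_iff by linarith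
  have I2: "(\<integral>v. (s v)\<^sup>2 \<partial>unif_sphere) \<le> 2 * real DIM('b) * (norm H)\<^sup>2 + 2 * (real DIM('b))\<^sup>2 * l\<^sup>2 * \<mu>2\<^sup>2 / 4"
    using integral_zo_coeff_square[OF diff_y grad_y_lipschitz_in_y mu2_pos less_imp_le[OF l_pos], of 1]
    unfolding s_def H_def grad_y_def by simp
  show ?thesis
    using ascent_arith[OF beta_pos l_pos _ norm_ge_zero beta_l_d2_le I1 I2 R]
    unfolding H_def by simp
qed

text \<open>The coefficient of \<open>\<alpha>\<^sup>2 s\<^sup>2\<close> in one step: curvature of \<open>(3/2) \<Phi>\<close> and of \<open>-(1/2) f\<close> in \<open>x\<close>,
  and the change of \<open>\<nabla>\<^sub>y f\<close> caused by the \<open>x\<close>-step.\<close>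

definition K :: real where
  "K = 3/4 * L_Phi + l / 4 + \<beta> * l\<^sup>2 / 4"

lemma K_nonneg: "K \<ge> 0"
  using l_pos mu_pos beta_pos by (simp add: K_def L_Phi_def)

lemma K_le: "K \<le> 343 / 176 * L"
proof -
  have "3/4 * L_Phi \<le> 18 / 11 * L"
    unfolding L_def L_Phi_def using l_pos mu_pos by (simp add: field_simps)
  then show ?thesis
    unfolding K_def using beta_l2_le l_le_L by linarith
qed

lemma potential_decrease_split:
  "potential (x, y) - potential (zo_step (x, y) (u, v))
    = (3/2 * (Phi f x - Phi f (x_next x y u)) - 1/2 * (f x y - f (x_next x y u) y))
      + 1/2 * (f (x_next x y u) (y_next (x_next x y u) y v) - f (x_next x y u) y)"
  by (simp add: potential_def zo_step_def Let_def algebra_simps)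

lemma integral_potential_decrease_v:
  assumes u: "norm u = 1"
  shows "(\<integral>v. potential (x, y) - potential (zo_step (x, y) (u, v)) \<partial>unif_sphere)
    \<ge> \<alpha> * (zo_coeff (\<lambda>x. f x y) \<mu>1 x u * (((3/2) *\<^sub>R grad (Phi f) x - (1/2) *\<^sub>R grad_x x y) \<bullet> u))
       - K * \<alpha>\<^sup>2 * (zo_coeff (\<lambda>x. f x y) \<mu>1 x u)\<^sup>2
       + \<beta> / 8 * (norm (grad_y x y))\<^sup>2 - 5/32 * \<beta> * (real DIM('b))\<^sup>2 * l\<^sup>2 * \<mu>2\<^sup>2"
proof -
  interpret prob_space "unif_sphere :: 'b measure" by (rule prob_space_unif_sphere)
  define x1 where "x1 = x_next x y u"
  define s where "s = zo_coeff (\<lambda>x. f x y) \<mu>1 x u"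
  define a where "a = grad (Phi f) x"
  define G where "G = grad_x x y"
  define H where "H = grad_y x y"
  define H1 where "H1 = grad_y x1 y"
  have dx: "x1 - x = - ((\<alpha> * s) *\<^sub>R u)"
    unfolding x1_def x_next_def s_def by simp
  have step_sq: "(norm (x1 - x))\<^sup>2 = \<alpha>\<^sup>2 * s\<^sup>2"
    unfolding dx using u by (simp add: power_mult_distrib)
  have "a \<bullet> (x1 - x) = - (\<alpha> * s * (a \<bullet> u))"
    unfolding dx by simp
  then have Phi_step: "Phi f x1 \<le> Phi f x - \<alpha> * s * (a \<bullet> u) + L_Phi / 2 * (\<alpha>\<^sup>2 * s\<^sup>2)"
    using Phi_descent[of x1 x] unfolding a_def[symmetric] step_sq by simp
  have "G \<bullet> (x1 - x) = - (\<alpha> * s * (G \<bullet> u))"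
    unfolding dx by simp
  then have f_step: "f x1 y \<ge> f x y - \<alpha> * s * (G \<bullet> u) - l / 2 * (\<alpha>\<^sup>2 * s\<^sup>2)"
    using taylor_bound_x[of x1 y x] unfolding G_def[symmetric] step_sq abs_le_iff by simp
  have "(norm H)\<^sup>2 \<le> 2 * (norm H1)\<^sup>2 + 2 * (l\<^sup>2 * (\<alpha>\<^sup>2 * s\<^sup>2))"
    using grad_y_norm_shift[of x y x1] unfolding H_def H1_def step_sq .
  from mult_left_mono[OF this, of "\<beta> / 8"] beta_pos
  have H_shift: "\<beta> / 8 * (norm H)\<^sup>2 \<le> \<beta> / 4 * (norm H1)\<^sup>2 + \<beta> / 4 * (l\<^sup>2 * (\<alpha>\<^sup>2 * s\<^sup>2))"
    by (simp add: algebra_simps)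
  have "(\<integral>v. potential (x, y) - potential (zo_step (x, y) (u, v)) \<partial>unif_sphere)
      = (3/2 * (Phi f x - Phi f x1) - 1/2 * (f x y - f x1 y))
        + 1/2 * (\<integral>v. f x1 (y_next x1 y v) - f x1 y \<partial>unif_sphere)"
    unfolding potential_decrease_split x1_def[symmetric] using prob_space
    by (simp add: y_next_def integrable_unif_sphere_continuous continuous_intros continuous_on_zo_coeff_y)
  moreover have "(\<integral>v. f x1 (y_next x1 y v) - f x1 y \<partial>unif_sphere)
      \<ge> \<beta> / 2 * (norm H1)\<^sup>2 - 5/16 * \<beta> * (real DIM('b))\<^sup>2 * l\<^sup>2 * \<mu>2\<^sup>2"
    unfolding H1_def by (rule integral_f_y_next_gain)
  moreover have "\<alpha> * (s * (((3/2) *\<^sub>R a - (1/2) *\<^sub>R G) \<bullet> u))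
      = 3/2 * (\<alpha> * s * (a \<bullet> u)) - 1/2 * (\<alpha> * s * (G \<bullet> u))"
    by (simp add: inner_diff_left algebra_simps)
  moreover have "K * \<alpha>\<^sup>2 * s\<^sup>2 = 3/4 * L_Phi * (\<alpha>\<^sup>2 * s\<^sup>2) + l / 4 * (\<alpha>\<^sup>2 * s\<^sup>2)
      + \<beta> / 4 * (l\<^sup>2 * (\<alpha>\<^sup>2 * s\<^sup>2))"
    by (simp add: K_def algebra_simps)
  moreover have "L_Phi / 2 * (\<alpha>\<^sup>2 * s\<^sup>2) * (3/2) = 3/4 * L_Phi * (\<alpha>\<^sup>2 * s\<^sup>2)"
    and "l / 2 * (\<alpha>\<^sup>2 * s\<^sup>2) * (1/2) = l / 4 * (\<alpha>\<^sup>2 * s\<^sup>2)"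
    and "1/2 * (\<beta> / 2 * (norm H1)\<^sup>2 - 5/16 * \<beta> * (real DIM('b))\<^sup>2 * l\<^sup>2 * \<mu>2\<^sup>2)
      = \<beta> / 4 * (norm H1)\<^sup>2 - 5/32 * \<beta> * (real DIM('b))\<^sup>2 * l\<^sup>2 * \<mu>2\<^sup>2"
    by simp_all
  moreover have "3/2 * (Phi f x - Phi f x1) \<ge> 3/2 * (\<alpha> * s * (a \<bullet> u)) - L_Phi / 2 * (\<alpha>\<^sup>2 * s\<^sup>2) * (3/2)"
    using Phi_step by argo
  moreover have "- 1/2 * (f x y - f x1 y) \<ge> - 1/2 * (\<alpha> * s * (G \<bullet> u)) - l / 2 * (\<alpha>\<^sup>2 * s\<^sup>2) * (1/2)"
    using f_step by argo
  ultimately show ?thesis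
    using H_shift unfolding s_def[symmetric] a_def[symmetric] G_def[symmetric] H_def[symmetric]
    by argo
qed

lemma estimator_variance_absorbed:
  assumes "G \<ge> 0"
  shows "K * \<alpha>\<^sup>2 * (3/2 * real DIM('a) * G) \<le> 1029 / 3520 * (\<alpha> * G)"
proof -
  have "K * (\<alpha> * real DIM('a)) \<le> 343 / 176 * L * (\<alpha> * real DIM('a))"
    using K_le alpha_pos by (intro mult_right_mono) auto
  also have "\<dots> \<le> 343 / 176 * (1/10)"
    using alpha_d1_L_le by (simp add: mult_ac)
  finally have "K * (\<alpha> * real DIM('a)) * (3/2 * \<alpha> * G) \<le> 343 / 1760 * (3/2 * \<alpha> * G)"
    using alpha_pos assms by (intro mult_right_mono) auto
  then show ?thesis
    by (simp add: power2_eq_square algebra_simps)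
qed

lemma gradient_mismatch_absorbed:
  assumes "0 \<le> D" "D \<le> 12 / 11 * l / \<mu> * Hn"
  shows "121 / 36 * (\<alpha> * D\<^sup>2) \<le> \<beta> / 8 * Hn\<^sup>2"
proof -
  define \<kappa> where "\<kappa> = l / \<mu>"
  have "D\<^sup>2 \<le> (12 / 11 * (\<kappa> * Hn))\<^sup>2"
    using assms by (simp add: \<kappa>_def power_mono)
  then have "121 / 144 * D\<^sup>2 \<le> \<kappa>\<^sup>2 * Hn\<^sup>2"
    by (simp add: power2_eq_square algebra_simps)
  then have "121 / 36 * (\<alpha> * D\<^sup>2) \<le> (4 * \<alpha> * \<kappa>\<^sup>2) * Hn\<^sup>2"
    using mult_left_mono[of _ _ "4 * \<alpha>"] alpha_pos by fastforce
  also have "\<dots> \<le> \<beta> / 8 * Hn\<^sup>2"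
    using alpha_kappa_le unfolding \<kappa>_def by (intro mult_right_mono) auto
  finally show ?thesis .
qed

lemma smoothing_error_x_le:
  "\<alpha> * (11/16 * (real DIM('a) * l * \<mu>1 / 2)\<^sup>2) + K * \<alpha>\<^sup>2 * (3/4 * (real DIM('a))\<^sup>2 * l\<^sup>2 * \<mu>1\<^sup>2)
    \<le> (5 * real DIM('a) * L + 3 / (2 * \<alpha>) + 3/2 * L + real DIM('b) * L) * (real DIM('a))\<^sup>2 * L\<^sup>2 * \<alpha>\<^sup>2 / 4 * \<mu>1\<^sup>2"
proof -
  define d1 d2 where "d1 = real DIM('a)" and "d2 = real DIM('b)"
  have d: "d1 \<ge> 1" "d2 \<ge> 1" by (simp_all add: d1_def d2_def)
  have l2_le: "l\<^sup>2 \<le> L\<^sup>2" using l_le_L l_pos by (simp add: power_mono)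
  have "\<alpha> * (11/16 * (d1 * l * \<mu>1 / 2)\<^sup>2) = 11/64 * \<alpha> * d1\<^sup>2 * \<mu>1\<^sup>2 * l\<^sup>2"
    by (simp add: power2_eq_square)
  also have "\<dots> \<le> 11/64 * \<alpha> * d1\<^sup>2 * \<mu>1\<^sup>2 * L\<^sup>2"
    using l2_le alpha_pos by (intro mult_left_mono) auto
  also have "\<dots> \<le> 3/8 * \<alpha> * d1\<^sup>2 * \<mu>1\<^sup>2 * L\<^sup>2"
    using alpha_pos by (intro mult_right_mono) auto
  also have "\<dots> = 3 / (2 * \<alpha>) * d1\<^sup>2 * L\<^sup>2 * \<alpha>\<^sup>2 / 4 * \<mu>1\<^sup>2"
    using alpha_pos by (simp add: power2_eq_square field_simps)
  finally have x_bias: "\<alpha> * (11/16 * (d1 * l * \<mu>1 / 2)\<^sup>2) \<le> 3 / (2 * \<alpha>) * d1\<^sup>2 * L\<^sup>2 * \<alpha>\<^sup>2 / 4 * \<mu>1\<^sup>2" .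
  have "5 * L \<le> 5 * d1 * L" and "L \<le> d2 * L"
    using L_pos d by simp_all
  then have "K * (3/4) \<le> (5 * d1 * L + 3/2 * L + d2 * L) / 4"
    using K_le L_pos by argo
  then have "K * (3/4) * (\<alpha>\<^sup>2 * d1\<^sup>2 * \<mu>1\<^sup>2) * l\<^sup>2 \<le> (5 * d1 * L + 3/2 * L + d2 * L) / 4 * (\<alpha>\<^sup>2 * d1\<^sup>2 * \<mu>1\<^sup>2) * L\<^sup>2"
    using K_nonneg l2_le by (intro mult_mono) auto
  then have x_var: "K * \<alpha>\<^sup>2 * (3/4 * d1\<^sup>2 * l\<^sup>2 * \<mu>1\<^sup>2) \<le> (5 * d1 * L + 3/2 * L + d2 * L) * d1\<^sup>2 * L\<^sup>2 * \<alpha>\<^sup>2 / 4 * \<mu>1\<^sup>2"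
    by (simp add: algebra_simps)
  have "(5 * d1 * L + 3 / (2 * \<alpha>) + 3/2 * L + d2 * L) * d1\<^sup>2 * L\<^sup>2 * \<alpha>\<^sup>2 / 4 * \<mu>1\<^sup>2
      = (5 * d1 * L + 3/2 * L + d2 * L) * d1\<^sup>2 * L\<^sup>2 * \<alpha>\<^sup>2 / 4 * \<mu>1\<^sup>2 + 3 / (2 * \<alpha>) * d1\<^sup>2 * L\<^sup>2 * \<alpha>\<^sup>2 / 4 * \<mu>1\<^sup>2"
    by (simp add: algebra_simps)
  with x_bias x_var show ?thesis
    unfolding d1_def d2_def by linarith
qed

lemma one_step_arith:
  fixes A D P Hn wn LB :: real
  defines "E \<equiv> real DIM('a) * l * \<mu>1 / 2"
  assumes nonneg: "A \<ge> 0" "D \<ge> 0"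
    and P: "\<bar>P\<bar> \<le> A * D"
    and D_le: "D \<le> 12 / 11 * l / \<mu> * Hn"
    and wn: "wn \<le> A + D / 2"
    and LB: "LB \<ge> \<alpha> * (A\<^sup>2 + P / 2 - D\<^sup>2 / 2 - wn * E)
               - K * \<alpha>\<^sup>2 * (3/2 * real DIM('a) * (A\<^sup>2 + 2 * P + D\<^sup>2) + 3/4 * (real DIM('a))\<^sup>2 * l\<^sup>2 * \<mu>1\<^sup>2)
               + \<beta> / 8 * Hn\<^sup>2 - 5/32 * \<beta> * (real DIM('b))\<^sup>2 * l\<^sup>2 * \<mu>2\<^sup>2"
  shows "LB \<ge> \<alpha> / 4 * A\<^sup>2
           - (5 * real DIM('a) * L + 3 / (2 * \<alpha>) + 3/2 * L + real DIM('b) * L) * (real DIM('a))\<^sup>2 * L\<^sup>2 * \<alpha>\<^sup>2 / 4 * \<mu>1\<^sup>2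
           - 3 * (real DIM('b))\<^sup>2 * L\<^sup>2 * \<beta> / 16 * \<mu>2\<^sup>2"
proof -
  define G2 where "G2 = A\<^sup>2 + 2 * P + D\<^sup>2"
  have "G2 \<ge> 0"
    using P zero_le_power2[of "A - D"] by (simp add: G2_def power2_eq_square algebra_simps abs_le_iff)
  then have variance: "K * \<alpha>\<^sup>2 * (3/2 * real DIM('a) * G2) \<le> 1029 / 3520 * (\<alpha> * G2)"
    by (rule estimator_variance_absorbed)
  have "\<alpha> * (A\<^sup>2 / 4 - 11/16 * E\<^sup>2)
      \<le> \<alpha> * (A\<^sup>2 + P / 2 - D\<^sup>2 / 2 - (A + D / 2) * E - 1029/3520 * G2 + 121/36 * D\<^sup>2)"
    using potential_bracket_arith[OF nonneg P, of E] alpha_pos unfolding G2_def by (intro mult_left_mono) auto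
  moreover have "\<alpha> * (wn * E) \<le> \<alpha> * ((A + D / 2) * E)"
    using wn l_pos mu1_pos alpha_pos by (intro mult_left_mono mult_right_mono) (auto simp: E_def)
  moreover have "5/32 * \<beta> * (real DIM('b))\<^sup>2 * l\<^sup>2 * \<mu>2\<^sup>2 \<le> 3 * (real DIM('b))\<^sup>2 * L\<^sup>2 * \<beta> / 16 * \<mu>2\<^sup>2"
  proof -
    have "5/32 * (\<beta> * (real DIM('b))\<^sup>2 * \<mu>2\<^sup>2) * l\<^sup>2 \<le> 3/16 * (\<beta> * (real DIM('b))\<^sup>2 * \<mu>2\<^sup>2) * L\<^sup>2"
      using l_le_L l_pos beta_pos mu2_pos by (intro mult_mono power_mono) auto
    then show ?thesis by (simp add: algebra_simps)
  qed
  ultimately show ?thesis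
    using LB variance gradient_mismatch_absorbed[OF nonneg(2) D_le] smoothing_error_x_le
    unfolding G2_def E_def by (simp add: algebra_simps) argo
qed

lemma continuous_on_potential_decrease: "continuous_on UNIV (\<lambda>w. potential p - potential (zo_step p w))"
  unfolding potential_def zo_step_def x_next_def y_next_def zo_coeff_def divide_inverse Let_def
  by (intro continuous_intros)

lemma expected_potential_decrease_moments:
  fixes x :: 'a and y :: 'b
  defines "s \<equiv> zo_coeff (\<lambda>x. f x y) \<mu>1 x"
    and "w \<equiv> (3/2) *\<^sub>R grad (Phi f) x - (1/2) *\<^sub>R grad_x x y"
  shows "(\<integral>p. potential (x, y) - potential (zo_step (x, y) p) \<partial>(unif_sphere \<Otimes>\<^sub>M unif_sphere))
    \<ge> \<alpha> * (\<integral>u. s u * (w \<bullet> u) \<partial>unif_sphere) - K * \<alpha>\<^sup>2 * (\<integral>u. (s u)\<^sup>2 \<partial>unif_sphere)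
      + \<beta> / 8 * (norm (grad_y x y))\<^sup>2 - 5/32 * \<beta> * (real DIM('b))\<^sup>2 * l\<^sup>2 * \<mu>2\<^sup>2"
proof -
  interpret prob_space "unif_sphere :: 'a measure" by (rule prob_space_unif_sphere)
  define \<Delta> where "\<Delta> p = potential (x, y) - potential (zo_step (x, y) p)" for p
  define C where "C = \<beta> / 8 * (norm (grad_y x y))\<^sup>2 - 5/32 * \<beta> * (real DIM('b))\<^sup>2 * l\<^sup>2 * \<mu>2\<^sup>2"
  have s_cont: "continuous_on UNIV s"
    unfolding s_def by (rule continuous_on_zo_coeff_x)
  have int_\<Delta>: "integrable (unif_sphere \<Otimes>\<^sub>M unif_sphere) \<Delta>"
    unfolding \<Delta>_def by (intro integrable_unif_sphere_pair_continuous continuous_on_potential_decrease)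
  have "(\<integral>u. \<alpha> * (s u * (w \<bullet> u)) - K * \<alpha>\<^sup>2 * (s u)\<^sup>2 + C \<partial>unif_sphere)
      \<le> (\<integral>u. (\<integral>v. \<Delta> (u, v) \<partial>unif_sphere) \<partial>unif_sphere)"
  proof (rule integral_mono_AE)
    show "AE u in unif_sphere. \<alpha> * (s u * (w \<bullet> u)) - K * \<alpha>\<^sup>2 * (s u)\<^sup>2 + C \<le> (\<integral>v. \<Delta> (u, v) \<partial>unif_sphere)"
      using AE_unif_sphere_norm
    proof eventually_elim
      case (elim u)
      show ?case
        using integral_potential_decrease_v[OF elim, where x = x and y = y]
        unfolding \<Delta>_def s_def w_def C_def by argo
    qed
  qed (use s_cont pair_sigma_finite.integrable_fst'[OF pair_sigma_finite_unif_sphere int_\<Delta>]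
       in \<open>auto intro!: integrable_unif_sphere_continuous continuous_intros\<close>)
  also have "\<dots> = (\<integral>p. \<Delta> p \<partial>(unif_sphere \<Otimes>\<^sub>M unif_sphere))"
    by (rule pair_sigma_finite.integral_fst'[OF pair_sigma_finite_unif_sphere int_\<Delta>])
  also have "(\<integral>u. \<alpha> * (s u * (w \<bullet> u)) - K * \<alpha>\<^sup>2 * (s u)\<^sup>2 + C \<partial>unif_sphere)
      = \<alpha> * (\<integral>u. s u * (w \<bullet> u) \<partial>unif_sphere) - K * \<alpha>\<^sup>2 * (\<integral>u. (s u)\<^sup>2 \<partial>unif_sphere) + C"
    using s_cont prob_space by (simp add: integrable_unif_sphere_continuous continuous_intros)
  finally show ?thesis
    unfolding \<Delta>_def C_def by argo
qed

lemma expected_potential_decrease: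
  "(\<integral>w. potential (x, y) - potential (zo_step (x, y) w) \<partial>(unif_sphere \<Otimes>\<^sub>M unif_sphere))
     \<ge> \<alpha> / 4 * (norm (grad (Phi f) x))\<^sup>2
       - (5 * real DIM('a) * L + 3 / (2 * \<alpha>) + 3/2 * L + real DIM('b) * L) * (real DIM('a))\<^sup>2 * L\<^sup>2 * \<alpha>\<^sup>2 / 4 * \<mu>1\<^sup>2
       - 3 * (real DIM('b))\<^sup>2 * L\<^sup>2 * \<beta> / 16 * \<mu>2\<^sup>2"
proof -
  define \<Delta> where "\<Delta> w = potential (x, y) - potential (zo_step (x, y) w)" for w
  define s where "s = zo_coeff (\<lambda>x. f x y) \<mu>1 x"
  define a where "a = grad (Phi f) x"
  define G where "G = grad_x x y"
  define H where "H = grad_y x y"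
  define w where "w = (3/2) *\<^sub>R a - (1/2) *\<^sub>R G"
  have LB: "(\<integral>w. \<Delta> w \<partial>(unif_sphere \<Otimes>\<^sub>M unif_sphere))
      \<ge> \<alpha> * (\<integral>u. s u * (w \<bullet> u) \<partial>unif_sphere) - K * \<alpha>\<^sup>2 * (\<integral>u. (s u)\<^sup>2 \<partial>unif_sphere)
        + \<beta> / 8 * (norm H)\<^sup>2 - 5/32 * \<beta> * (real DIM('b))\<^sup>2 * l\<^sup>2 * \<mu>2\<^sup>2"
    unfolding \<Delta>_def s_def w_def a_def G_def H_def by (rule expected_potential_decrease_moments)
  have "\<bar>(\<integral>u. s u * (w \<bullet> u) \<partial>unif_sphere) - G \<bullet> w\<bar> \<le> norm w * (real DIM('a) * l * \<mu>1 / 2)"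
    using integral_zo_coeff_inner[OF diff_x grad_x_lipschitz_in_x mu1_pos less_imp_le[OF l_pos]]
    unfolding s_def G_def grad_x_def .
  then have "(\<integral>u. s u * (w \<bullet> u) \<partial>unif_sphere) \<ge> w \<bullet> G - norm w * (real DIM('a) * l * \<mu>1 / 2)"
    unfolding abs_le_iff inner_commute[of G w] by linarith
  then have bias_term: "\<alpha> * (\<integral>u. s u * (w \<bullet> u) \<partial>unif_sphere) \<ge> \<alpha> * (w \<bullet> G - norm w * (real DIM('a) * l * \<mu>1 / 2))"
    using alpha_pos by (simp add: mult_left_mono)
  moreover have "(\<integral>u. (s u)\<^sup>2 \<partial>unif_sphere) \<le> 3/2 * real DIM('a) * (norm G)\<^sup>2 + 3/4 * (real DIM('a))\<^sup>2 * l\<^sup>2 * \<mu>1\<^sup>2"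
    using integral_zo_coeff_square[OF diff_x grad_x_lipschitz_in_x mu1_pos less_imp_le[OF l_pos], of "1/2"]
    unfolding s_def G_def grad_x_def by simp
  then have variance_term: "K * \<alpha>\<^sup>2 * (\<integral>u. (s u)\<^sup>2 \<partial>unif_sphere)
      \<le> K * \<alpha>\<^sup>2 * (3/2 * real DIM('a) * (norm G)\<^sup>2 + 3/4 * (real DIM('a))\<^sup>2 * l\<^sup>2 * \<mu>1\<^sup>2)"
    using K_nonneg by (intro mult_left_mono) auto
  have wG: "w \<bullet> G = (norm a)\<^sup>2 + (a \<bullet> (G - a)) / 2 - (norm (G - a))\<^sup>2 / 2"
    unfolding w_def by (simp add: power2_norm_eq_inner inner_diff_left inner_diff_right inner_commute field_simps)
  have normG: "(norm G)\<^sup>2 = (norm a)\<^sup>2 + 2 * (a \<bullet> (G - a)) + (norm (G - a))\<^sup>2"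
    by (simp add: power2_norm_eq_inner inner_diff_left inner_diff_right inner_commute algebra_simps)
  have "(\<integral>w. \<Delta> w \<partial>(unif_sphere \<Otimes>\<^sub>M unif_sphere))
      \<ge> \<alpha> * ((norm a)\<^sup>2 + (a \<bullet> (G - a)) / 2 - (norm (G - a))\<^sup>2 / 2 - norm w * (real DIM('a) * l * \<mu>1 / 2))
        - K * \<alpha>\<^sup>2 * (3/2 * real DIM('a) * ((norm a)\<^sup>2 + 2 * (a \<bullet> (G - a)) + (norm (G - a))\<^sup>2)
            + 3/4 * (real DIM('a))\<^sup>2 * l\<^sup>2 * \<mu>1\<^sup>2)
        + \<beta> / 8 * (norm H)\<^sup>2 - 5/32 * \<beta> * (real DIM('b))\<^sup>2 * l\<^sup>2 * \<mu>2\<^sup>2"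
    using LB bias_term variance_term unfolding wG normG by argo
  moreover have "norm w \<le> norm a + norm (G - a) / 2"
  proof -
    have "(3/2::real) *\<^sub>R a = a + (1/2) *\<^sub>R a"
      using scaleR_add_left[of 1 "1/2" a] by simp
    then have "w = a - (1/2) *\<^sub>R (G - a)"
      unfolding w_def by (simp add: algebra_simps)
    then show ?thesis
      using norm_triangle_ineq4[of a "(1/2) *\<^sub>R (G - a)"] by simp
  qed
  moreover have "norm (G - a) \<le> 12 / 11 * l / \<mu> * norm H"
    using grad_Phi_near_grad_x[of x y] by (simp add: a_def G_def H_def norm_minus_commute)
  ultimately show ?thesis
    unfolding \<Delta>_def a_def[symmetric]
    by (intro one_step_arith[OF norm_ge_zero norm_ge_zero Cauchy_Schwarz_ineq2]) auto
qed

end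

section \<open>Expectation over the direction sequence\<close>

abbreviation unif_dirs :: "('a::euclidean_space \<times> 'b::euclidean_space) measure" where
  "unif_dirs \<equiv> unif_sphere \<Otimes>\<^sub>M unif_sphere"

lemma product_prob_space_unif_dirs:
  "product_prob_space (\<lambda>_::nat. (unif_dirs :: ('a::euclidean_space \<times> 'b::euclidean_space) measure))"
proof -
  interpret prob_space "unif_dirs :: ('a \<times> 'b) measure" by (rule prob_space_unif_sphere_pair)
  show ?thesis by unfold_locales
qed

lemma prob_space_PiM_unif_dirs:
  "prob_space (PiM J (\<lambda>_::nat. (unif_dirs :: ('a::euclidean_space \<times> 'b::euclidean_space) measure)))"
proof -
  interpret product_prob_space "\<lambda>_::nat. (unif_dirs :: ('a \<times> 'b) measure)" J
    by (rule product_prob_space_unif_dirs)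
  show ?thesis by (rule P.prob_space_axioms)
qed

lemma AE_PiM_unif_dirs:
  assumes "finite S" "S \<subseteq> J"
  shows "AE \<omega> in PiM J (\<lambda>_::nat. (unif_dirs :: ('a::euclidean_space \<times> 'b::euclidean_space) measure)).
           \<forall>i\<in>S. \<omega> i \<in> cball 0 1 \<times> cball 0 1"
proof (rule AE_finite_allI[OF assms(1)])
  fix i assume "i \<in> S"
  with assms(2) show "AE \<omega> in PiM J (\<lambda>_. unif_dirs :: ('a \<times> 'b) measure). \<omega> i \<in> cball 0 1 \<times> cball 0 1"
    by (intro AE_PiM_component[OF prob_space_unif_sphere_pair _ AE_unif_sphere_pair]) auto
qed

lemma integral_PiM_UNIV_eq_restrict:
  fixes g :: "(nat \<Rightarrow> 'a::euclidean_space \<times> 'b::euclidean_space) \<Rightarrow> real"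
  assumes J: "finite J" and g: "\<And>\<omega>. g (restrict \<omega> J) = g \<omega>"
    and g_meas: "g \<in> borel_measurable (PiM J (\<lambda>_. unif_dirs))"
  shows "(\<integral>\<omega>. g \<omega> \<partial>PiM UNIV (\<lambda>_. unif_dirs)) = (\<integral>\<omega>. g \<omega> \<partial>PiM J (\<lambda>_. unif_dirs))"
proof -
  interpret product_prob_space "\<lambda>_::nat. (unif_dirs :: ('a \<times> 'b) measure)" UNIV
    by (rule product_prob_space_unif_dirs)
  have "(\<integral>\<omega>. g \<omega> \<partial>PiM UNIV (\<lambda>_. unif_dirs)) = (\<integral>\<omega>. g (restrict \<omega> J) \<partial>PiM UNIV (\<lambda>_. unif_dirs))"
    using g by simp
  also have "\<dots> = (\<integral>\<omega>. g \<omega> \<partial>distr (PiM UNIV (\<lambda>_. unif_dirs)) (PiM J (\<lambda>_. unif_dirs)) (\<lambda>\<omega>. restrict \<omega> J))"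
    by (rule integral_distr[symmetric, OF measurable_restrict_subset g_meas]) simp
  also have "\<dots> = (\<integral>\<omega>. g \<omega> \<partial>PiM J (\<lambda>_. unif_dirs))"
    using distr_PiM_restrict_finite[OF J] by simp
  finally show ?thesis .
qed

lemma sets_borel_pair_unif_dirs:
  "sets (borel \<Otimes>\<^sub>M (unif_dirs :: ('a::euclidean_space \<times> 'b::euclidean_space) measure))
    = sets (borel :: (('c::euclidean_space) \<times> ('a \<times> 'b)) measure)"
proof -
  have "sets (borel \<Otimes>\<^sub>M (unif_dirs :: ('a \<times> 'b) measure)) = sets ((borel :: 'c measure) \<Otimes>\<^sub>M (borel :: ('a \<times> 'b) measure))"
    by (rule sets_pair_measure_cong[OF refl sets_unif_sphere_pair])
  then show ?thesis
    by (simp only: borel_prod)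
qed

context zo_agda_setup
begin

abbreviation zo_iter :: "'a \<Rightarrow> 'b \<Rightarrow> (nat \<Rightarrow> 'a \<times> 'b) \<Rightarrow> nat \<Rightarrow> 'a \<times> 'b" where
  "zo_iter x0 y0 \<omega> s \<equiv> zo_agda f \<alpha> \<beta> \<mu>1 \<mu>2 x0 y0 \<omega> s"

lemma zo_iter_cong: "(\<And>i. i < s \<Longrightarrow> \<omega> i = \<omega>' i) \<Longrightarrow> zo_iter x0 y0 \<omega> s = zo_iter x0 y0 \<omega>' s"
  by (induction s) (simp_all add: zo_agda_Suc)

lemma zo_iter_restrict: "{..<s} \<subseteq> J \<Longrightarrow> zo_iter x0 y0 (restrict \<omega> J) s = zo_iter x0 y0 \<omega> s"
  by (rule zo_iter_cong) auto

lemma measurable_zo_iter: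
  "{..<s} \<subseteq> J \<Longrightarrow> (\<lambda>\<omega>. zo_iter x0 y0 \<omega> s) \<in> borel_measurable (PiM J (\<lambda>_. unif_dirs))"
proof (induction s)
  case (Suc s)
  then have "(\<lambda>\<omega>. zo_iter x0 y0 \<omega> s) \<in> borel_measurable (PiM J (\<lambda>_. unif_dirs))"
    by (simp add: lessThan_Suc)
  then have "(\<lambda>\<omega>. (zo_iter x0 y0 \<omega> s, \<omega> s)) \<in> measurable (PiM J (\<lambda>_. unif_dirs)) (borel \<Otimes>\<^sub>M unif_dirs)"
    using Suc.prems by (intro measurable_Pair measurable_component_singleton) auto
  moreover have "(\<lambda>q. zo_step (fst q) (snd q)) \<in> borel_measurable (borel \<Otimes>\<^sub>M (unif_dirs :: ('a \<times> 'b) measure))"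
    unfolding measurable_cong_sets[OF sets_borel_pair_unif_dirs refl]
    by (rule borel_measurable_continuous_onI[OF continuous_on_zo_step])
  ultimately have "(\<lambda>\<omega>. (\<lambda>q. zo_step (fst q) (snd q)) (zo_iter x0 y0 \<omega> s, \<omega> s))
      \<in> borel_measurable (PiM J (\<lambda>_. unif_dirs))"
    by (rule measurable_compose)
  then show ?case
    unfolding zo_agda_Suc by simp
qed simp

lemma zo_iter_in_compact:
  "\<exists>K. compact K \<and> (\<forall>\<omega>. (\<forall>i<s. \<omega> i \<in> cball 0 1 \<times> cball 0 1) \<longrightarrow> zo_iter x0 y0 \<omega> s \<in> K)"
proof (induction s)
  case 0
  have "zo_iter x0 y0 \<omega> 0 \<in> {(x0, y0)}" for \<omega>
    by simp
  then show ?case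
    using compact_sing[of "(x0, y0)"] by blast
next
  case (Suc s)
  then obtain K where K: "compact K" "\<And>\<omega>. (\<forall>i<s. \<omega> i \<in> cball 0 1 \<times> cball 0 1) \<Longrightarrow> zo_iter x0 y0 \<omega> s \<in> K"
    by blast
  let ?K' = "(\<lambda>q. zo_step (fst q) (snd q)) ` (K \<times> (cball 0 1 \<times> cball 0 1))"
  have "compact (K \<times> (cball (0::'a) 1 \<times> cball (0::'b) 1))"
    by (intro compact_Times K(1) compact_cball)
  then have "compact ?K'"
    by (rule compact_continuous_image[OF continuous_on_subset[OF continuous_on_zo_step subset_UNIV]])
  moreover have "zo_iter x0 y0 \<omega> (Suc s) \<in> ?K'" if "\<forall>i<Suc s. \<omega> i \<in> cball 0 1 \<times> cball 0 1" for \<omega>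
  proof -
    have "(zo_iter x0 y0 \<omega> s, \<omega> s) \<in> K \<times> (cball 0 1 \<times> cball 0 1)"
      using K(2)[of \<omega>] that by simp
    then show ?thesis
      unfolding zo_agda_Suc by (rule rev_image_eqI) simp
  qed
  ultimately show ?case by blast
qed

lemma integrable_zo_iter:
  fixes F :: "'a \<times> 'b \<Rightarrow> real"
  assumes F: "continuous_on UNIV F" and s: "{..<s} \<subseteq> J"
  shows "integrable (PiM J (\<lambda>_. unif_dirs)) (\<lambda>\<omega>. F (zo_iter x0 y0 \<omega> s))"
proof -
  interpret prob_space "PiM J (\<lambda>_::nat. (unif_dirs :: ('a \<times> 'b) measure))"
    by (rule prob_space_PiM_unif_dirs)
  obtain K where "compact K \<and> (\<forall>\<omega>. (\<forall>i<s. \<omega> i \<in> cball 0 1 \<times> cball 0 1) \<longrightarrow> zo_iter x0 y0 \<omega> s \<in> K)"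
    using zo_iter_in_compact by (rule exE)
  then have K: "compact K" "\<And>\<omega>. (\<forall>i<s. \<omega> i \<in> cball 0 1 \<times> cball 0 1) \<Longrightarrow> zo_iter x0 y0 \<omega> s \<in> K"
    by simp_all
  have "compact (F ` K)"
    by (rule compact_continuous_image[OF continuous_on_subset[OF F subset_UNIV] K(1)])
  then obtain B where B: "\<And>p. p \<in> K \<Longrightarrow> norm (F p) \<le> B"
    by (meson bounded_iff compact_imp_bounded imageI)
  show ?thesis
  proof (rule integrable_const_bound)
    show "AE \<omega> in PiM J (\<lambda>_. unif_dirs). norm (F (zo_iter x0 y0 \<omega> s)) \<le> B"
      using AE_PiM_unif_dirs[OF finite_lessThan s]
    proof eventually_elim
      case (elim \<omega>)
      then have "\<forall>i<s. \<omega> i \<in> cball 0 1 \<times> cball 0 1"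
        by blast
      then have "zo_iter x0 y0 \<omega> s \<in> K"
        by (rule K(2))
      then show ?case by (rule B)
    qed
    show "(\<lambda>\<omega>. F (zo_iter x0 y0 \<omega> s)) \<in> borel_measurable (PiM J (\<lambda>_. unif_dirs))"
      by (rule measurable_compose[OF measurable_zo_iter[OF s] borel_measurable_continuous_onI[OF F]])
  qed
qed

lemma integrable_integral_unif_dirs_zo_iter:
  fixes F :: "('a \<times> 'b) \<times> ('a \<times> 'b) \<Rightarrow> real"
  assumes F: "continuous_on UNIV F" and s: "{..<s} \<subseteq> J"
  shows "integrable (PiM J (\<lambda>_. unif_dirs)) (\<lambda>\<omega>. \<integral>w. F (zo_iter x0 y0 \<omega> s, w) \<partial>unif_dirs)"
proof -
  interpret P: prob_space "PiM J (\<lambda>_::nat. (unif_dirs :: ('a \<times> 'b) measure))"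
    by (rule prob_space_PiM_unif_dirs)
  interpret W: prob_space "unif_dirs :: ('a \<times> 'b) measure"
    by (rule prob_space_unif_sphere_pair)
  define h where "h p = (\<integral>w. F (p, w) \<partial>(unif_dirs :: ('a \<times> 'b) measure))" for p
  have "(\<lambda>(p, w). F (p, w)) \<in> borel_measurable (borel \<Otimes>\<^sub>M (unif_dirs :: ('a \<times> 'b) measure))"
    unfolding measurable_cong_sets[OF sets_borel_pair_unif_dirs refl]
    using borel_measurable_continuous_onI[OF F] by (simp add: case_prod_beta')
  then have h_meas: "h \<in> borel_measurable borel"
    unfolding h_def by (rule W.borel_measurable_lebesgue_integral)
  obtain K where "compact K \<and> (\<forall>\<omega>. (\<forall>i<s. \<omega> i \<in> cball 0 1 \<times> cball 0 1) \<longrightarrow> zo_iter x0 y0 \<omega> s \<in> K)"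
    using zo_iter_in_compact by (rule exE)
  then have K: "compact K" "\<And>\<omega>. (\<forall>i<s. \<omega> i \<in> cball 0 1 \<times> cball 0 1) \<Longrightarrow> zo_iter x0 y0 \<omega> s \<in> K"
    by simp_all
  have "compact (K \<times> (cball (0::'a) 1 \<times> cball (0::'b) 1))"
    by (intro compact_Times K(1) compact_cball)
  then have "compact (F ` (K \<times> (cball 0 1 \<times> cball 0 1)))"
    by (rule compact_continuous_image[OF continuous_on_subset[OF F subset_UNIV]])
  then obtain B where B: "\<And>q. q \<in> K \<times> (cball 0 1 \<times> cball 0 1) \<Longrightarrow> norm (F q) \<le> B"
    by (meson bounded_iff compact_imp_bounded imageI)
  have h_bound: "norm (h p) \<le> B" if "p \<in> K" for p
  proof -
    have int: "integrable unif_dirs (\<lambda>w. F (p, w))"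
      by (intro integrable_unif_sphere_pair_continuous continuous_on_compose2[OF F]) (auto intro: continuous_intros)
    have "AE w in (unif_dirs :: ('a \<times> 'b) measure). norm (F (p, w)) \<le> B"
      using AE_unif_sphere_pair by eventually_elim (use B that in auto)
    then have "AE w in (unif_dirs :: ('a \<times> 'b) measure). F (p, w) \<le> B"
      and "AE w in (unif_dirs :: ('a \<times> 'b) measure). - B \<le> F (p, w)"
      by (auto elim!: AE_mp simp: abs_le_iff)
    then show ?thesis
      using W.integral_le_const[OF int] W.integral_ge_const[OF int] by (force simp: h_def)
  qed
  show ?thesis
    unfolding h_def[symmetric]
  proof (rule P.integrable_const_bound)
    show "AE \<omega> in PiM J (\<lambda>_. unif_dirs). norm (h (zo_iter x0 y0 \<omega> s)) \<le> B"
      using AE_PiM_unif_dirs[OF finite_lessThan s]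
    proof eventually_elim
      case (elim \<omega>)
      then have "\<forall>i<s. \<omega> i \<in> cball 0 1 \<times> cball 0 1"
        by blast
      then show ?case
        by (intro h_bound K(2))
    qed
    show "(\<lambda>\<omega>. h (zo_iter x0 y0 \<omega> s)) \<in> borel_measurable (PiM J (\<lambda>_. unif_dirs))"
      by (rule measurable_compose[OF measurable_zo_iter[OF s] h_meas])
  qed
qed

text \<open>Integrating out the last direction \<open>\<omega> t\<close>, on which the state at time \<open>t\<close> does not depend.\<close>

lemma integral_potential_step:
  "(\<integral>\<omega>. potential (zo_iter x0 y0 \<omega> t) - potential (zo_iter x0 y0 \<omega> (Suc t)) \<partial>PiM UNIV (\<lambda>_. unif_dirs))
    = (\<integral>\<omega>. (\<integral>w. potential (zo_iter x0 y0 \<omega> t) - potential (zo_step (zo_iter x0 y0 \<omega> t) w) \<partial>unif_dirs)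
        \<partial>PiM {..<t} (\<lambda>_. unif_dirs))"
proof -
  define g where "g \<omega> = potential (zo_iter x0 y0 \<omega> t) - potential (zo_iter x0 y0 \<omega> (Suc t))" for \<omega>
  have int_g: "integrable (PiM {..<Suc t} (\<lambda>_. unif_dirs)) g"
    unfolding g_def
    by (intro Bochner_Integration.integrable_diff integrable_zo_iter continuous_on_potential) auto
  have g_upd: "g (fun_upd \<omega> t w) = potential (zo_iter x0 y0 \<omega> t) - potential (zo_step (zo_iter x0 y0 \<omega> t) w)" for \<omega> w
  proof -
    have "zo_iter x0 y0 (fun_upd \<omega> t w) t = zo_iter x0 y0 \<omega> t"
      by (rule zo_iter_cong) auto
    then show ?thesis
      unfolding g_def zo_agda_Suc by simp
  qed
  have "(\<integral>\<omega>. g \<omega> \<partial>PiM UNIV (\<lambda>_. unif_dirs)) = (\<integral>\<omega>. g \<omega> \<partial>PiM {..<Suc t} (\<lambda>_. unif_dirs))"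
  proof (rule integral_PiM_UNIV_eq_restrict)
    show "g (restrict \<omega> {..<Suc t}) = g \<omega>" for \<omega>
      unfolding g_def by (simp add: zo_iter_restrict)
    show "g \<in> borel_measurable (PiM {..<Suc t} (\<lambda>_. unif_dirs))"
      using int_g by blast
  qed simp
  also have "\<dots> = (\<integral>\<omega>. (\<integral>w. g (fun_upd \<omega> t w) \<partial>unif_dirs) \<partial>PiM {..<t} (\<lambda>_. unif_dirs))"
    using int_g product_prob_space_unif_dirs
    by (subst lessThan_Suc, intro product_sigma_finite.product_integral_insert)
       (auto simp: lessThan_Suc product_prob_space_def)
  also have "\<dots> = (\<integral>\<omega>. (\<integral>w. potential (zo_iter x0 y0 \<omega> t) - potential (zo_step (zo_iter x0 y0 \<omega> t) w) \<partial>unif_dirs)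
        \<partial>PiM {..<t} (\<lambda>_. unif_dirs))"
    by (simp only: g_upd)
  finally show ?thesis
    unfolding g_def .
qed

lemma expected_potential_descent:
  "(\<integral>\<omega>. potential (zo_iter x0 y0 \<omega> t) \<partial>PiM UNIV (\<lambda>_. unif_dirs))
     - (\<integral>\<omega>. potential (zo_iter x0 y0 \<omega> (Suc t)) \<partial>PiM UNIV (\<lambda>_. unif_dirs))
   \<ge> \<alpha> / 4 * (\<integral>\<omega>. (norm (grad (Phi f) (fst (zo_iter x0 y0 \<omega> t))))\<^sup>2 \<partial>PiM UNIV (\<lambda>_. unif_dirs))
     - (5 * real DIM('a) * L + 3 / (2 * \<alpha>) + 3/2 * L + real DIM('b) * L) * (real DIM('a))\<^sup>2 * L\<^sup>2 * \<alpha>\<^sup>2 / 4 * \<mu>1\<^sup>2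
     - 3 * (real DIM('b))\<^sup>2 * L\<^sup>2 * \<beta> / 16 * \<mu>2\<^sup>2"
proof -
  interpret P: prob_space "PiM {..<t} (\<lambda>_::nat. (unif_dirs :: ('a \<times> 'b) measure))"
    by (rule prob_space_PiM_unif_dirs)
  define c where "c = (5 * real DIM('a) * L + 3 / (2 * \<alpha>) + 3/2 * L + real DIM('b) * L) * (real DIM('a))\<^sup>2 * L\<^sup>2 * \<alpha>\<^sup>2 / 4 * \<mu>1\<^sup>2
    + 3 * (real DIM('b))\<^sup>2 * L\<^sup>2 * \<beta> / 16 * \<mu>2\<^sup>2"
  define N where "N \<omega> = (norm (grad (Phi f) (fst (zo_iter x0 y0 \<omega> t))))\<^sup>2" for \<omega>
  have N_cont: "continuous_on UNIV (\<lambda>p::'a \<times> 'b. (norm (grad (Phi f) (fst p)))\<^sup>2)"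
    by (intro continuous_intros)
  have int_N: "integrable (PiM {..<t} (\<lambda>_. unif_dirs)) N"
    unfolding N_def by (rule integrable_zo_iter[OF N_cont]) simp
  have "(\<integral>\<omega>. potential (zo_iter x0 y0 \<omega> t) \<partial>PiM UNIV (\<lambda>_. unif_dirs))
      - (\<integral>\<omega>. potential (zo_iter x0 y0 \<omega> (Suc t)) \<partial>PiM UNIV (\<lambda>_. unif_dirs))
      = (\<integral>\<omega>. (\<integral>w. potential (zo_iter x0 y0 \<omega> t) - potential (zo_step (zo_iter x0 y0 \<omega> t) w) \<partial>unif_dirs)
          \<partial>PiM {..<t} (\<lambda>_. unif_dirs))"
    unfolding integral_potential_step[symmetric]
    by (rule Bochner_Integration.integral_diff[symmetric];
        rule integrable_zo_iter[OF continuous_on_potential]; simp)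
  also have "\<dots> \<ge> (\<integral>\<omega>. \<alpha> / 4 * N \<omega> - c \<partial>PiM {..<t} (\<lambda>_. unif_dirs))"
  proof (rule integral_mono)
    show "integrable (PiM {..<t} (\<lambda>_. unif_dirs))
        (\<lambda>\<omega>. \<integral>w. potential (zo_iter x0 y0 \<omega> t) - potential (zo_step (zo_iter x0 y0 \<omega> t) w) \<partial>unif_dirs)"
    proof -
      have "continuous_on UNIV (\<lambda>q::('a \<times> 'b) \<times> ('a \<times> 'b). potential (fst q) - potential (zo_step (fst q) (snd q)))"
        unfolding potential_def zo_step_def x_next_def y_next_def zo_coeff_def divide_inverse Let_def
        by (intro continuous_intros)
      from integrable_integral_unif_dirs_zo_iter[OF this, of t "{..<t}" x0 y0] show ?thesis
        by simp
    qed
    show "\<alpha> / 4 * N \<omega> - c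
        \<le> (\<integral>w. potential (zo_iter x0 y0 \<omega> t) - potential (zo_step (zo_iter x0 y0 \<omega> t) w) \<partial>unif_dirs)" for \<omega>
      using expected_potential_decrease[of "fst (zo_iter x0 y0 \<omega> t)" "snd (zo_iter x0 y0 \<omega> t)"]
      by (simp add: N_def c_def)
  qed (use int_N in simp)
  also have "(\<integral>\<omega>. \<alpha> / 4 * N \<omega> - c \<partial>PiM {..<t} (\<lambda>_. unif_dirs))
      = \<alpha> / 4 * (\<integral>\<omega>. N \<omega> \<partial>PiM UNIV (\<lambda>_. unif_dirs)) - c"
  proof -
    have "(\<integral>\<omega>. N \<omega> \<partial>PiM UNIV (\<lambda>_. unif_dirs)) = (\<integral>\<omega>. N \<omega> \<partial>PiM {..<t} (\<lambda>_. unif_dirs))"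
    proof (rule integral_PiM_UNIV_eq_restrict)
      show "N (restrict \<omega> {..<t}) = N \<omega>" for \<omega>
        by (simp add: N_def zo_iter_restrict)
      show "N \<in> borel_measurable (PiM {..<t} (\<lambda>_. unif_dirs))"
        using int_N by blast
    qed simp
    then show ?thesis
      using int_N P.prob_space by simp
  qed
  finally show ?thesis
    unfolding N_def c_def by argo
qed

end

theorem lemma4:
  fixes f :: "'a::euclidean_space \<Rightarrow> 'b::euclidean_space \<Rightarrow> real"
    and \<mu> l \<alpha> \<beta> \<mu>1 \<mu>2 :: real and x0 :: 'a and y0 :: 'b and t :: nat
  defines "d1 \<equiv> real DIM('a)" and "d2 \<equiv> real DIM('b)"
    and "\<kappa> \<equiv> l / \<mu>" and "L \<equiv> l + l\<^sup>2 / (2 * \<mu>)"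
  assumes diff_x: "\<And>x y. (\<lambda>x'. f x' y) differentiable (at x)"
    and diff_y: "\<And>x y. (\<lambda>y'. f x y') differentiable (at y)"
    and max_attained: "\<And>x. \<exists>y. \<forall>y'. f x y' \<le> f x y"
    and mu_pos: "\<mu> > 0"
    and PL: "\<And>x y. (norm (grad (\<lambda>y'. f x y') y))\<^sup>2 \<ge> 2 * \<mu> * (Phi f x - f x y)"
    and l_pos: "l > 0"
    and lip_x: "\<And>x1 x2 y1 y2. norm (grad (\<lambda>x. f x y1) x1 - grad (\<lambda>x. f x y2) x2)
                   \<le> l * (norm (x1 - x2) + norm (y1 - y2))"
    and lip_y: "\<And>x1 x2 y1 y2. norm (grad (\<lambda>y. f x1 y) y1 - grad (\<lambda>y. f x2 y) y2)
                   \<le> l * (norm (x1 - x2) + norm (y1 - y2))"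
    and alpha_pos: "\<alpha> > 0" and beta_pos: "\<beta> > 0"
    and mu1_pos: "\<mu>1 > 0" and mu2_pos: "\<mu>2 > 0"
    and beta_le: "\<beta> \<le> 1 / (4 * d2 * L)"
    and alpha_le: "\<alpha> \<le> min (\<beta> / (32 * \<kappa>\<^sup>2)) (1 / (10 * d1 * L))"
  shows
    "(let xs = (\<lambda>\<omega> s. fst (zo_agda f \<alpha> \<beta> \<mu>1 \<mu>2 x0 y0 \<omega> s));
          ys = (\<lambda>\<omega> s. snd (zo_agda f \<alpha> \<beta> \<mu>1 \<mu>2 x0 y0 \<omega> s));
          V = (\<lambda>\<omega> s. 3/2 * Phi f (xs \<omega> s) - 1/2 * f (xs \<omega> s) (ys \<omega> s));
          \<theta>1 = (5 * d1 * L + 3 / (2 * \<alpha>) + 3/2 * L + d2 * L) * d1\<^sup>2 * L\<^sup>2 * \<alpha>\<^sup>2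
      in (\<integral>\<omega>. V \<omega> t \<partial>dir_space) - (\<integral>\<omega>. V \<omega> (Suc t) \<partial>dir_space)
         \<ge> \<alpha> / 4 * (\<integral>\<omega>. (norm (grad (Phi f) (xs \<omega> t)))\<^sup>2 \<partial>dir_space)
           - \<theta>1 / 4 * \<mu>1\<^sup>2 - 3 * d2\<^sup>2 * L\<^sup>2 * \<beta> / 16 * \<mu>2\<^sup>2)"
proof -
  interpret Z: zo_agda_setup f \<mu> l \<alpha> \<beta> \<mu>1 \<mu>2
    by unfold_locales (use assms in \<open>auto simp: d1_def d2_def \<kappa>_def L_def\<close>)
  show ?thesis
    using Z.expected_potential_descent[of x0 y0 t]
    unfolding Let_def Z.potential_def Z.L_def dir_space_def d1_def d2_def L_def
    by simp
qed

end
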